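(* Let $n\geq 3$ and let $K\subset\mathbb{R}^n$ be an affine symmetric body of revolution admitting two different hyperplanes of revolution. Then $K$ is an ellipsoid.
   Context: A symmetric convex body $K\subset\mathbb{R}^n$ (compact, convex, nonempty interior, invariant under $x\mapsto-x$) is a symmetric body of revolution if it admits an axis of revolution: a 1-dimensional linear subspace $L$ such that every section of $K$ by an affine hyperplane $A$ orthogonal to $L$ is a closed Euclidean $(n-1)$-ball in $A$ centered at $A\cap L$ (possibly empty or a point); $L^\perp$ is the associated hyperplane of revolution. An affine symmetric body of revolution is a convex body linearly equivalent to a symmetric body of revolution; the images of an axis and its associated hyperplane under the linear equivalence are called an axis of revolution and associated hyperplane of revolution of it. An ellipsoid is a set affinely equivalent to a closed Euclidean unit ball. *)

theory Defs
  imports "HOL-Analysis.Analysis"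
begin

definition symmetric_convex_body :: "'a::euclidean_space set \<Rightarrow> bool" where
  "symmetric_convex_body K \<longleftrightarrow>
     compact K \<and> convex K \<and> interior K \<noteq> {} \<and> (\<forall>x\<in>K. - x \<in> K)"

definition axis_of_revolution :: "'a::euclidean_space set \<Rightarrow> 'a set \<Rightarrow> bool" where
  "axis_of_revolution K L \<longleftrightarrow>
     subspace L \<and> dim L = 1 \<and>
     (\<forall>c\<in>L. let A = (\<lambda>x. c + x) ` (orthogonal_comp L) in
        K \<inter> A = {} \<or> (\<exists>r\<ge>0. K \<inter> A = cball c r \<inter> A))"

definition symmetric_body_of_revolution :: "'a::euclidean_space set \<Rightarrow> bool" where
  "symmetric_body_of_revolution K \<longleftrightarrow>
     symmetric_convex_body K \<and> (\<exists>L. axis_of_revolution K L)"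

definition affine_symmetric_body_of_revolution :: "'a::euclidean_space set \<Rightarrow> bool" where
  "affine_symmetric_body_of_revolution K \<longleftrightarrow>
     (\<exists>(T::'a\<Rightarrow>'a) K0. linear T \<and> bij T \<and> symmetric_body_of_revolution K0 \<and> K = T ` K0)"

definition hyperplane_of_revolution :: "'a::euclidean_space set \<Rightarrow> 'a set \<Rightarrow> bool" where
  "hyperplane_of_revolution K H \<longleftrightarrow>
     (\<exists>(T::'a\<Rightarrow>'a) K0 L. linear T \<and> bij T \<and> symmetric_convex_body K0 \<and> axis_of_revolution K0 L
        \<and> K = T ` K0 \<and> H = T ` (orthogonal_comp L))"

definition ellipsoid :: "'a::euclidean_space set \<Rightarrow> bool" where
  "ellipsoid E \<longleftrightarrow>
     (\<exists>(T::'a\<Rightarrow>'a) a. linear T \<and> bij T \<and> E = (\<lambda>x. T x + a) ` cball 0 1)"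

end

theory Submission
  imports Defs
begin

text \<open>Write \<open>K\<close> as a symmetric convex body invariant under the rotations about a unit axis
  \<open>e\<close>, such that \<open>B K\<close> is invariant under the rotations about \<open>m\<close> for a linear isomorphism
  \<open>B\<close>, the hyperplanes \<open>e\<^sup>\<bottom>\<close> and \<open>B\<^sup>-\<^sup>1 (m\<^sup>\<bottom>)\<close> being different. Rotating about \<open>e\<close> brings
  every point of a double cone into \<open>B\<^sup>-\<^sup>1 (m\<^sup>\<bottom>)\<close>, where \<open>K\<close> is cut in an ellipsoid; so on
  that cone \<open>K\<close> is a sublevel set of \<open>\<kappa>\<^sub>1 (|x|\<^sup>2 + \<beta>\<^sub>1 (x \<bullet> e)\<^sup>2)\<close>, and symmetrically of
  \<open>\<kappa>\<^sub>2 (|B x|\<^sup>2 + \<beta>\<^sub>2 (B x \<bullet> m)\<^sup>2)\<close>. On the open cone where both descriptions hold, both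
  forms are the squared gauge of \<open>K\<close>, so they coincide.

  The product of the half-turns about the two axes preserves \<open>K\<close> and acts on the plane of
  the axes with determinant \<open>1\<close>; boundedness of its orbits forces its trace into \<open>(-2, 2)\<close>,
  and this makes the common form positive definite. Stretching along \<open>e\<close> turns it into a
  multiple of the Euclidean norm, and then both axes are genuine axes of revolution of the
  stretched body. Alternating rotations about two non-parallel axes move any point of a
  sphere arbitrarily close to the great sphere orthogonal to both, so that body is a ball.\<close>

section \<open>Linear recurrences and limits\<close>

lemma nonneg_eq_if_scaled_le_iff:
  fixes a b c :: real
  assumes "a \<ge> 0" "b \<ge> 0" "c > 0" "\<And>t. t > 0 \<Longrightarrow> t * a \<le> c \<longleftrightarrow> t * b \<le> c"
  shows "a = b"
proof (rule ccontr)
  assume "a \<noteq> b"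
  then have ab: "a + b > 0" using assms(1,2) by linarith
  define t where "t = 2 * c / (a + b)"
  have t: "t > 0" using ab assms(3) by (simp add: t_def)
  have "t * min a b < c" "t * max a b > c"
    using ab assms(1-3) \<open>a \<noteq> b\<close> by (auto simp: t_def min_def max_def field_simps)
  then show False using assms(4)[OF t] by (auto simp: min_def max_def split: if_splits)
qed

lemma recurrence_ge_index:
  fixes g :: "nat \<Rightarrow> real"
  assumes "\<tau> \<ge> 2" "g 0 = 0" "g 1 = 1" "\<And>k. g (Suc (Suc k)) = \<tau> * g (Suc k) - g k"
  shows "real k \<le> g k \<and> 1 \<le> g (Suc k) - g k"
proof (induction k)
  case 0
  then show ?case using assms by simp
next
  case (Suc k)
  then have "g (Suc k) \<ge> real (Suc k)" by simp
  then have "(\<tau> - 2) * g (Suc k) \<ge> 0" using assms(1) by simp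
  moreover have "g (Suc (Suc k)) - g (Suc k) = (\<tau> - 2) * g (Suc k) + (g (Suc k) - g k)"
    using assms(4)[of k] by (simp add: algebra_simps)
  ultimately show ?case using Suc \<open>g (Suc k) \<ge> real (Suc k)\<close> by simp
qed

lemma recurrence_abs_ge_index:
  fixes g :: "nat \<Rightarrow> real"
  assumes "\<bar>\<tau>\<bar> \<ge> 2" "g 0 = 0" "g 1 = 1" "\<And>k. g (Suc (Suc k)) = \<tau> * g (Suc k) - g k"
  shows "real k \<le> \<bar>g k\<bar>"
proof (cases "\<tau> \<ge> 2")
  case True
  then show ?thesis using recurrence_ge_index[of \<tau> g k] assms by auto
next
  case False
  define h where "h k = - ((-1)^k * g k)" for k
  have "h (Suc (Suc k)) = (-\<tau>) * h (Suc k) - h k" for k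
    by (simp add: h_def assms(4) algebra_simps)
  then have "real k \<le> h k"
    using recurrence_ge_index[of "-\<tau>" h k] False assms(1-3) by (simp add: h_def)
  moreover have "\<bar>h k\<bar> = \<bar>g k\<bar>" by (simp add: h_def abs_mult power_abs)
  ultimately show ?thesis by linarith
qed

text \<open>For \<open>|\<tau>| \<ge> 2\<close> the numbers \<open>u k \<bullet> p / u 1 \<bullet> p\<close> grow at least linearly.\<close>
lemma bounded_recurrence_abs_less_2:
  fixes u :: "nat \<Rightarrow> 'a::real_inner"
  assumes "bounded (range u)" "\<And>k. u (Suc (Suc k)) = \<tau> *\<^sub>R u (Suc k) - u k"
    and "u 0 \<bullet> p = 0" "u 1 \<bullet> p \<noteq> 0"
  shows "\<bar>\<tau>\<bar> < 2"
proof (rule ccontr)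
  assume "\<not> \<bar>\<tau>\<bar> < 2"
  define g where "g k = (u k \<bullet> p) / (u 1 \<bullet> p)" for k
  have g: "real k \<le> \<bar>g k\<bar>" for k
    by (rule recurrence_abs_ge_index[where \<tau> = \<tau>])
      (use assms(2-4) \<open>\<not> \<bar>\<tau>\<bar> < 2\<close> in \<open>auto simp: g_def inner_diff_left diff_divide_distrib\<close>)
  obtain M where M: "\<And>k. norm (u k) \<le> M"
    using assms(1) by (auto simp: bounded_iff)
  have bound: "\<bar>g k\<bar> \<le> M * norm p / \<bar>u 1 \<bullet> p\<bar>" for k
  proof -
    have "\<bar>u k \<bullet> p\<bar> \<le> M * norm p"
      using Cauchy_Schwarz_ineq2[of "u k" p] M[of k] by (meson mult_right_mono norm_ge_zero order_trans)
    then show ?thesis by (simp add: g_def abs_div divide_right_mono)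
  qed
  obtain k :: nat where "real k > M * norm p / \<bar>u 1 \<bullet> p\<bar>"
    using reals_Archimedean2 by blast
  then show False using g[of k] bound[of k] by linarith
qed

lemma closed_scaleR_limit:
  fixes K :: "'a::real_normed_vector set"
  assumes "closed K" "t > 0" "\<And>s. 0 < s \<Longrightarrow> s < t \<Longrightarrow> s *\<^sub>R x \<in> K"
  shows "t *\<^sub>R x \<in> K"
proof -
  have "\<forall>\<^sub>F s in at_left t. s \<in> {0<..<t}"
    using assms(2) by (intro eventually_at_left_real)
  then have "\<forall>\<^sub>F s in at_left t. s *\<^sub>R x \<in> K"
    by (rule eventually_mono) (simp add: assms(3))
  moreover have "((\<lambda>s. s *\<^sub>R x) \<longlongrightarrow> t *\<^sub>R x) (at_left t)" by (intro tendsto_intros)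
  ultimately show ?thesis
    by (rule Lim_in_closed_set[OF assms(1) _ trivial_limit_at_left_real])
qed

text \<open>Otherwise the iterates of a point with \<open>f \<noteq> 0\<close> drift off to infinity along \<open>e\<close>.\<close>
lemma bounded_shear_invariant_imp_zero:
  fixes K :: "'a::real_normed_vector set" and f :: "'a \<Rightarrow> real"
  assumes "bounded K" "0 \<in> interior K" "linear f" "f e = 0" "e \<noteq> 0"
    and shear: "\<And>y. y \<in> K \<Longrightarrow> y + f y *\<^sub>R e \<in> K"
  shows "f x = 0"
proof (rule ccontr)
  assume "f x \<noteq> 0"
  obtain \<epsilon> where "\<epsilon> > 0" "ball 0 \<epsilon> \<subseteq> K" using assms(2) by (meson mem_interior)
  define t where "t = \<epsilon> / (2 * (norm x + 1))"
  have "norm x + 1 > 0" using norm_ge_zero[of x] by linarith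
  then have "t > 0" "t * (norm x + 1) = \<epsilon> / 2"
    using \<open>\<epsilon> > 0\<close> by (simp_all add: t_def field_simps)
  then have "norm (t *\<^sub>R x) < \<epsilon>" using \<open>\<epsilon> > 0\<close> by (simp add: algebra_simps)
  then have x1: "t *\<^sub>R x \<in> K" using \<open>ball 0 \<epsilon> \<subseteq> K\<close> by auto
  define c where "c = f (t *\<^sub>R x)"
  have "c \<noteq> 0" using \<open>f x \<noteq> 0\<close> \<open>t > 0\<close> by (simp add: c_def linear_scale[OF assms(3)])
  have orbit: "t *\<^sub>R x + (real k * c) *\<^sub>R e \<in> K" for k
  proof (induction k)
    case (Suc k)
    have height: "f (t *\<^sub>R x + (real k * c) *\<^sub>R e) = c"
      using assms(4) by (simp add: c_def linear_add[OF assms(3)] linear_scale[OF assms(3)])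
    have step: "t *\<^sub>R x + (real (Suc k) * c) *\<^sub>R e = t *\<^sub>R x + (real k * c) *\<^sub>R e + c *\<^sub>R e"
      by (simp add: distrib_right scaleR_add_left add.assoc)
    show ?case using shear[OF Suc] by (simp only: height step)
  qed (use x1 in simp)
  obtain M where M: "\<And>y. y \<in> K \<Longrightarrow> norm y \<le> M" using assms(1) by (auto simp: bounded_iff)
  define n where "n = norm (t *\<^sub>R x)"
  have "\<bar>c\<bar> * norm e > 0" using \<open>c \<noteq> 0\<close> assms(5) by simp
  obtain k :: nat where "real k > (M + n) / (\<bar>c\<bar> * norm e)"
    using reals_Archimedean2 by blast
  then have far: "M + n < real k * (\<bar>c\<bar> * norm e)"
    by (simp only: pos_divide_less_eq[OF \<open>\<bar>c\<bar> * norm e > 0\<close>])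
  have "norm ((t *\<^sub>R x + (real k * c) *\<^sub>R e) - t *\<^sub>R x) \<le> norm (t *\<^sub>R x + (real k * c) *\<^sub>R e) + n"
    unfolding n_def by (rule norm_triangle_ineq4)
  then have "norm ((real k * c) *\<^sub>R e) \<le> norm (t *\<^sub>R x + (real k * c) *\<^sub>R e) + n"
    by (simp only: add_diff_cancel_left')
  moreover have "norm ((real k * c) *\<^sub>R e) = real k * (\<bar>c\<bar> * norm e)"
    by (simp add: abs_mult)
  ultimately show False
    using M[OF orbit, of k] far by linarith
qed

section \<open>Vectors, hyperplanes and linear maps\<close>

lemma exists_orthogonal_to_two:
  fixes e f :: "'a::euclidean_space"
  assumes "DIM('a) \<ge> 3"
  obtains w where "norm w = 1" "w \<bullet> e = 0" "w \<bullet> f = 0"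
proof -
  have "dim {e, f} \<le> card {e, f}" by (rule dim_le_card) (auto intro: span_base)
  also have "\<dots> \<le> 2" by (simp add: card_insert_if)
  finally have "dim {e, f} < DIM('a)" using assms by linarith
  then obtain x where "x \<noteq> 0" "\<And>y. y \<in> span {e, f} \<Longrightarrow> orthogonal x y"
    using orthogonal_to_subspace_exists by blast
  then show ?thesis
    using that[of "x /\<^sub>R norm x"] by (auto simp: orthogonal_def span_base)
qed

lemma exists_orthogonal_not_orthogonal:
  fixes p q :: "'a::real_inner"
  assumes "q \<noteq> 0" "{x. x \<bullet> p = 0} \<noteq> {x. x \<bullet> q = 0}"
  obtains x where "x \<bullet> p = 0" "x \<bullet> q \<noteq> 0"
proof -
  have "\<exists>x. x \<bullet> p = 0 \<and> x \<bullet> q \<noteq> 0"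
  proof (rule ccontr)
    assume "\<nexists>x. x \<bullet> p = 0 \<and> x \<bullet> q \<noteq> 0"
    then have sub: "x \<bullet> q = 0" if "x \<bullet> p = 0" for x using that by blast
    have proj: "x \<bullet> q = (x \<bullet> p) / (p \<bullet> p) * (p \<bullet> q)" for x
    proof -
      have "(x - ((x \<bullet> p) / (p \<bullet> p)) *\<^sub>R p) \<bullet> p = 0"
        by (cases "p = 0") (auto simp: inner_diff_left)
      then have "(x - ((x \<bullet> p) / (p \<bullet> p)) *\<^sub>R p) \<bullet> q = 0" by (rule sub)
      then show ?thesis by (simp add: inner_diff_left)
    qed
    have "p \<bullet> q \<noteq> 0" "p \<bullet> p \<noteq> 0"
      using proj[of q] assms(1) by auto
    then have "x \<bullet> p = 0" if "x \<bullet> q = 0" for x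
      using that proj[of x] by simp
    then show False using sub assms(2) by blast
  qed
  then show ?thesis using that by blast
qed

text \<open>The vector \<open>v\<close> is the projection of \<open>e\<close> onto \<open>\<nu>\<^sup>\<bottom>\<close>, rescaled.\<close>
lemma exists_unit_height_in_hyperplane:
  fixes e \<nu> :: "'a::real_inner"
  assumes "x0 \<bullet> \<nu> = 0" "x0 \<bullet> e \<noteq> 0"
  obtains v where "v \<bullet> \<nu> = 0" "v \<bullet> e = 1" "\<And>w. w \<bullet> e = 0 \<Longrightarrow> w \<bullet> \<nu> = 0 \<Longrightarrow> w \<bullet> v = 0"
proof -
  define v0 where "v0 = e - ((e \<bullet> \<nu>) / (\<nu> \<bullet> \<nu>)) *\<^sub>R \<nu>"
  have v0\<nu>: "v0 \<bullet> \<nu> = 0"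
    by (cases "\<nu> = 0") (auto simp: v0_def inner_diff_left)
  have v0e: "v0 \<bullet> e = v0 \<bullet> v0"
    using v0\<nu> by (simp add: v0_def inner_diff_right)
  have "v0 \<noteq> 0"
  proof
    assume "v0 = 0"
    then have "e = ((e \<bullet> \<nu>) / (\<nu> \<bullet> \<nu>)) *\<^sub>R \<nu>" by (simp add: v0_def)
    then have "x0 \<bullet> e = 0" using assms(1) by (metis inner_scaleR_right mult_zero_right)
    then show False using assms(2) by simp
  qed
  then have "v0 \<bullet> e \<noteq> 0" using v0e by simp
  then show ?thesis
    using v0\<nu> by (intro that[of "v0 /\<^sub>R (v0 \<bullet> e)"]) (auto simp: v0_def inner_diff_right)
qed

lemma norm_orthogonal_unit_combination:
  fixes u w :: "'a::real_inner"
  assumes "norm u = 1" "norm w = 1" "w \<bullet> u = 0" "\<bar>a\<bar> \<le> 1"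
  shows "norm (a *\<^sub>R u + sqrt (1 - a\<^sup>2) *\<^sub>R w) = 1"
proof -
  define s where "s = sqrt (1 - a\<^sup>2)"
  have "a\<^sup>2 \<le> 1" using assms(4) by (simp add: abs_square_le_1)
  then have "s * s = 1 - a\<^sup>2" by (simp add: s_def)
  moreover have "u \<bullet> u = 1" "w \<bullet> w = 1" using assms(1,2) by (simp_all add: norm_eq_1)
  moreover have "(a *\<^sub>R u + s *\<^sub>R w) \<bullet> (a *\<^sub>R u + s *\<^sub>R w)
      = a * a * (u \<bullet> u) + 2 * a * s * (w \<bullet> u) + s * s * (w \<bullet> w)"
    by (simp add: inner_add_left inner_add_right inner_commute[of u w] algebra_simps)
  ultimately show ?thesis
    using assms(3) by (simp add: norm_eq_1 s_def power2_eq_square)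
qed

lemma subspace_dim_1_span_unit:
  fixes L :: "'a::euclidean_space set"
  assumes "subspace L" "dim L = 1"
  obtains e where "norm e = 1" "L = span {e}"
proof -
  obtain Bs where Bs: "Bs \<subseteq> L" "independent Bs" "L \<subseteq> span Bs" "card Bs = 1"
    using basis_exists assms(2) by metis
  then obtain u where u: "Bs = {u}" using card_1_singletonE by metis
  have "u \<noteq> 0" using Bs(2) u dependent_zero by blast
  define e where "e = u /\<^sub>R norm u"
  have "u = norm u *\<^sub>R e" "e = inverse (norm u) *\<^sub>R u"
    using \<open>u \<noteq> 0\<close> by (simp_all add: e_def)
  then have "span {u} = span {e}"
    unfolding span_eq by (metis empty_subsetI insert_subset span_base span_scale singletonI)
  moreover have "L = span {u}" using span_subspace[OF _ _ assms(1), of "{u}"] Bs u by simp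
  ultimately show ?thesis using that[of e] \<open>u \<noteq> 0\<close> by (simp add: e_def)
qed

lemma orthogonal_comp_span_singleton: "orthogonal_comp (span {e}) = {x. x \<bullet> e = 0}"
proof (intro set_eqI iffI)
  fix x assume "x \<in> orthogonal_comp (span {e})"
  then show "x \<in> {x. x \<bullet> e = 0}"
    by (auto simp: orthogonal_comp_def orthogonal_def inner_commute span_base)
next
  fix x assume "x \<in> {x. x \<bullet> e = 0}"
  then have "orthogonal x y" if "y \<in> span {e}" for y
    using orthogonal_to_span[of y "{e}" x] that by (auto simp: orthogonal_def)
  then show "x \<in> orthogonal_comp (span {e})"
    by (auto simp: orthogonal_comp_def orthogonal_commute)
qed

lemma translated_hyperplane: "(+) c ` {x. x \<bullet> e = 0} = {z. z \<bullet> e = c \<bullet> e}"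
proof (intro set_eqI iffI)
  show "z \<in> {z. z \<bullet> e = c \<bullet> e}" if "z \<in> (+) c ` {x. x \<bullet> e = 0}" for z
    using that by (auto simp: inner_add_left)
  show "z \<in> (+) c ` {x. x \<bullet> e = 0}" if "z \<in> {z. z \<bullet> e = c \<bullet> e}" for z
    using that by (intro rev_image_eqI[of "z - c"]) (simp_all add: inner_diff_left)
qed

lemma linear_image_convex_body:
  fixes B :: "'a::euclidean_space \<Rightarrow> 'a"
  assumes "linear B" "bij B" "compact K" "convex K" "0 \<in> interior K"
  shows "compact (B ` K)" "convex (B ` K)" "0 \<in> interior (B ` K)"
proof -
  show "compact (B ` K)"
    by (rule compact_continuous_image[OF linear_continuous_on assms(3)])
      (use linear_conv_bounded_linear assms(1) in blast)
  show "convex (B ` K)" using convex_linear_image[OF assms(1,4)] .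
  show "0 \<in> interior (B ` K)"
    using assms(5) linear_0[OF assms(1)] by (force simp: interior_bijective_linear_image[OF assms(1,2)])
qed

lemma image_hyperplane_neq_witnesses:
  fixes B :: "'a::euclidean_space \<Rightarrow> 'a"
  assumes "linear B" "bij B" "e \<noteq> 0" "m \<noteq> 0" "B ` {x. x \<bullet> e = 0} \<noteq> {z. z \<bullet> m = 0}"
  obtains x1 x2 where "x1 \<bullet> e = 0" "B x1 \<bullet> m \<noteq> 0" "x2 \<bullet> e \<noteq> 0" "B x2 \<bullet> m = 0"
proof -
  define \<nu> where "\<nu> = adjoint B m"
  have \<nu>: "B x \<bullet> m = x \<bullet> \<nu>" for x by (simp add: \<nu>_def adjoint_works[OF assms(1)])
  have BA: "B (inv B z) = z" for z using assms(2) by (simp add: bij_is_surj surj_f_inv_f)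
  have "\<nu> \<noteq> 0" using \<nu>[of "inv B m"] assms(4) by (auto simp: BA)
  have "B ` {x. x \<bullet> \<nu> = 0} = {z. z \<bullet> m = 0}"
  proof (intro set_eqI iffI)
    show "z \<in> {z. z \<bullet> m = 0}" if "z \<in> B ` {x. x \<bullet> \<nu> = 0}" for z
      using that \<nu> by auto
    show "z \<in> B ` {x. x \<bullet> \<nu> = 0}" if "z \<in> {z. z \<bullet> m = 0}" for z
      using that \<nu>[of "inv B z"] BA[of z] by (intro rev_image_eqI[of "inv B z"]) simp_all
  qed
  then have "{x. x \<bullet> e = 0} \<noteq> {x. x \<bullet> \<nu> = 0}" using assms(5) by metis
  moreover obtain x1 where "x1 \<bullet> e = 0" "x1 \<bullet> \<nu> \<noteq> 0"
    using exists_orthogonal_not_orthogonal[OF \<open>\<nu> \<noteq> 0\<close>] calculation by blast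
  moreover obtain x2 where "x2 \<bullet> \<nu> = 0" "x2 \<bullet> e \<noteq> 0"
    using exists_orthogonal_not_orthogonal[OF assms(3)] calculation(1) by metis
  ultimately show ?thesis using that \<nu> by simp
qed

lemma linear_bij_inv_comp:
  fixes S T :: "'a::euclidean_space \<Rightarrow> 'a"
  assumes "linear S" "bij S" "linear T" "bij T"
  shows "linear (inv S \<circ> T)" "bij (inv S \<circ> T)" "S ` (inv S \<circ> T) ` X = T ` X"
  using linear_compose[OF assms(3) inj_linear_imp_inv_linear[OF assms(1) bij_is_inj[OF assms(2)]]]
    bij_comp[OF assms(4) bij_imp_bij_inv[OF assms(2)]] assms(2)
  by (simp_all add: image_image bij_is_surj surj_f_inv_f)

section \<open>Ellipsoids and stretches\<close>

lemma ellipsoid_linear_image: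
  fixes T :: "'a::euclidean_space \<Rightarrow> 'a"
  assumes "linear T" "bij T" "ellipsoid E"
  shows "ellipsoid (T ` E)"
proof -
  obtain S :: "'a \<Rightarrow> 'a" and a where S: "linear S" "bij S" "E = (\<lambda>x. S x + a) ` cball 0 1"
    using assms(3) unfolding ellipsoid_def by blast
  show ?thesis
    unfolding ellipsoid_def
  proof (intro exI conjI)
    show "linear (T \<circ> S)" using linear_compose[OF S(1) assms(1)] .
    show "bij (T \<circ> S)" using bij_comp[OF S(2) assms(2)] .
    show "T ` E = (\<lambda>x. (T \<circ> S) x + T a) ` cball 0 1"
      unfolding S(3) image_image by (simp add: linear_add[OF assms(1)])
  qed
qed

lemma ellipsoid_cball:
  assumes "R > 0"
  shows "ellipsoid (cball (0::'a::euclidean_space) R)"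
proof -
  show ?thesis
    unfolding ellipsoid_def
  proof (intro exI conjI)
    show "linear (\<lambda>x::'a. R *\<^sub>R x)" by (rule linear_scaleR)
    show "bij (\<lambda>x::'a. R *\<^sub>R x)"
      using assms by (intro bij_betw_byWitness[where f' = "\<lambda>x. x /\<^sub>R R"]) auto
    show "cball (0::'a) R = (\<lambda>x. R *\<^sub>R x + 0) ` cball 0 1"
      using cball_scale[of R "0::'a" 1] assms by simp
  qed
qed

lemma ellipsoid_if_linear_image_cball:
  fixes T :: "'a::euclidean_space \<Rightarrow> 'a"
  assumes "linear T" "bij T" "R > 0" "T ` K = cball 0 R"
  shows "ellipsoid K"
proof -
  have "K = inv T ` cball 0 R"
    using assms(2,4) by (metis bij_is_inj image_inv_f_f)
  moreover have "linear (inv T)" using inj_linear_imp_inv_linear[OF assms(1) bij_is_inj[OF assms(2)]] .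
  ultimately show ?thesis
    using ellipsoid_linear_image[OF _ bij_imp_bij_inv[OF assms(2)] ellipsoid_cball[OF assms(3)]]
    by simp
qed

definition stretch :: "real \<Rightarrow> 'a::real_inner \<Rightarrow> 'a \<Rightarrow> 'a" where
  "stretch s e x = x + ((s - 1) * (x \<bullet> e)) *\<^sub>R e"

lemma linear_stretch: "linear (stretch s e)"
  by (rule linearI) (simp_all add: stretch_def inner_add_left algebra_simps)

lemma stretch_inner_axis: "norm e = 1 \<Longrightarrow> stretch s e x \<bullet> e = s * (x \<bullet> e)"
  by (simp add: stretch_def inner_add_left norm_eq_1 left_diff_distrib)

lemma inner_stretch:
  assumes "norm e = 1"
  shows "stretch s e x \<bullet> stretch s e y = x \<bullet> y + (s\<^sup>2 - 1) * (x \<bullet> e) * (y \<bullet> e)"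
proof -
  have "e \<bullet> e = 1" using assms by (simp add: norm_eq_1)
  then show ?thesis
    by (simp add: stretch_def inner_add_left inner_add_right inner_commute[of e x]
        inner_commute[of e y] power2_eq_square algebra_simps)
qed

lemma norm_stretch_sq:
  "norm e = 1 \<Longrightarrow> (norm (stretch s e x))\<^sup>2 = (norm x)\<^sup>2 + (s\<^sup>2 - 1) * (x \<bullet> e)\<^sup>2"
  using inner_stretch[of e s x x] by (simp add: dot_square_norm power2_eq_square)

lemma stretch_stretch: "norm e = 1 \<Longrightarrow> stretch s e (stretch t e x) = stretch (s * t) e x"
  by (simp add: stretch_def inner_add_left norm_eq_1 algebra_simps)

lemma stretch_1 [simp]: "stretch 1 e x = x"
  by (simp add: stretch_def)

lemma stretch_inverse: "norm e = 1 \<Longrightarrow> s \<noteq> 0 \<Longrightarrow> stretch (1 / s) e (stretch s e x) = x"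
  by (simp add: stretch_stretch)

lemma bij_stretch: "norm e = 1 \<Longrightarrow> s \<noteq> 0 \<Longrightarrow> bij (stretch s e)"
  by (rule bij_betw_byWitness[where f' = "stretch (1 / s) e"]) (simp_all add: stretch_stretch)

section \<open>Rotation invariance\<close>

text \<open>For a unit vector \<open>e\<close>, the points with the same height along \<open>e\<close> and the same norm as \<open>x\<close>
  form the orbit of \<open>x\<close> under the orthogonal maps fixing \<open>e\<close>.\<close>
definition rotation_invariant :: "'a::real_inner set \<Rightarrow> 'a \<Rightarrow> bool" where
  "rotation_invariant K e \<longleftrightarrow> (\<forall>x y. x \<in> K \<longrightarrow> y \<bullet> e = x \<bullet> e \<longrightarrow> norm y = norm x \<longrightarrow> y \<in> K)"

lemma rotation_invariantD:
  "rotation_invariant K e \<Longrightarrow> x \<in> K \<Longrightarrow> y \<bullet> e = x \<bullet> e \<Longrightarrow> norm y = norm x \<Longrightarrow> y \<in> K"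
  by (auto simp: rotation_invariant_def)

lemma rotation_invariant_scaleR_iff:
  assumes "rotation_invariant K e" "y \<bullet> e = x \<bullet> e" "norm y = norm x"
  shows "t *\<^sub>R x \<in> K \<longleftrightarrow> t *\<^sub>R y \<in> K"
  using rotation_invariantD[OF assms(1), of "t *\<^sub>R x" "t *\<^sub>R y"]
    rotation_invariantD[OF assms(1), of "t *\<^sub>R y" "t *\<^sub>R x"] assms(2,3)
  by auto

lemma rotation_invariant_imageD:
  assumes "rotation_invariant (B ` K) m" "inj B" "x \<in> K"
    and "B y \<bullet> m = B x \<bullet> m" "norm (B y) = norm (B x)"
  shows "y \<in> K"
  using rotation_invariantD[OF assms(1) imageI[OF assms(3)] assms(4,5)] assms(2)
  by (simp add: inj_image_mem_iff)

lemma rotation_invariant_scaled_axis: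
  assumes "c \<noteq> 0"
  shows "rotation_invariant K (c *\<^sub>R e) \<longleftrightarrow> rotation_invariant K e"
  using assms by (simp add: rotation_invariant_def)

definition axial_reflection :: "'a::real_inner \<Rightarrow> 'a \<Rightarrow> 'a" where
  "axial_reflection e x = (2 * (x \<bullet> e)) *\<^sub>R e - x"

lemma rotation_invariant_axial_reflection:
  assumes "rotation_invariant K e" "norm e = 1" "x \<in> K"
  shows "axial_reflection e x \<in> K"
proof (rule rotation_invariantD[OF assms(1,3)])
  have ee: "e \<bullet> e = 1" using assms(2) by (simp add: norm_eq_1)
  show "axial_reflection e x \<bullet> e = x \<bullet> e"
    using ee by (simp add: axial_reflection_def inner_diff_left)
  have "axial_reflection e x \<bullet> axial_reflection e x = x \<bullet> x"
    using ee by (simp add: axial_reflection_def inner_diff_left inner_diff_right inner_commute[of e x]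
        algebra_simps)
  then show "norm (axial_reflection e x) = norm x"
    by (simp add: norm_eq_sqrt_inner)
qed

lemma rotation_invariant_stretch:
  assumes "norm e = 1" "s \<noteq> 0" "rotation_invariant K e"
  shows "rotation_invariant (stretch s e ` K) e"
  unfolding rotation_invariant_def
proof (intro allI impI)
  fix x' y'
  assume "x' \<in> stretch s e ` K" "y' \<bullet> e = x' \<bullet> e" "norm y' = norm x'"
  then obtain x where "x \<in> K" "x' = stretch s e x" by blast
  define y where "y = stretch (1 / s) e y'"
  have "y \<bullet> e = x \<bullet> e"
    using \<open>y' \<bullet> e = x' \<bullet> e\<close> assms(1,2) by (simp add: y_def \<open>x' = _\<close> stretch_inner_axis)
  moreover have "norm y = norm x"
  proof -
    have "(norm y)\<^sup>2 = (norm (stretch (1 / s) e x'))\<^sup>2"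
      using \<open>y' \<bullet> e = x' \<bullet> e\<close> \<open>norm y' = norm x'\<close> by (simp add: y_def norm_stretch_sq[OF assms(1)])
    also have "\<dots> = (norm x)\<^sup>2" using assms(1,2) by (simp add: \<open>x' = _\<close> stretch_inverse)
    finally show ?thesis by (simp add: power2_eq_iff_nonneg)
  qed
  ultimately have "y \<in> K" using rotation_invariantD[OF assms(3) \<open>x \<in> K\<close>] by blast
  moreover have "y' = stretch s e y" using assms(1,2) by (simp add: y_def stretch_stretch)
  ultimately show "y' \<in> stretch s e ` K" by blast
qed

text \<open>Every section of a body of revolution is a ball centred on the axis, so two points at the
  same height and distance from the origin are at the same distance from that centre.\<close>
lemma axis_of_revolutionE:
  fixes K L :: "'a::euclidean_space set"
  assumes "axis_of_revolution K L"
  obtains e where "norm e = 1" "orthogonal_comp L = {x. x \<bullet> e = 0}" "rotation_invariant K e"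
proof -
  have L: "subspace L" "dim L = 1"
    and sec: "\<And>c. c \<in> L \<Longrightarrow> K \<inter> ((+) c ` orthogonal_comp L) = {} \<or>
        (\<exists>r\<ge>0. K \<inter> ((+) c ` orthogonal_comp L) = cball c r \<inter> ((+) c ` orthogonal_comp L))"
    using assms unfolding axis_of_revolution_def Let_def by auto
  obtain e where "norm e = 1" "L = span {e}" using subspace_dim_1_span_unit[OF L] by blast
  then have ee: "e \<bullet> e = 1" and oc: "orthogonal_comp L = {x. x \<bullet> e = 0}"
    by (simp_all add: norm_eq_1 orthogonal_comp_span_singleton)
  have "y \<in> K" if "x \<in> K" "y \<bullet> e = x \<bullet> e" "norm y = norm x" for x y
  proof -
    define c where "c = (x \<bullet> e) *\<^sub>R e"
    define A where "A = {z. z \<bullet> e = x \<bullet> e}"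
    have "c \<in> L" unfolding \<open>L = span {e}\<close> c_def by (intro span_scale span_base) simp
    moreover have "(+) c ` orthogonal_comp L = A"
      unfolding oc translated_hyperplane A_def by (simp add: c_def ee)
    ultimately have "K \<inter> A = {} \<or> (\<exists>r\<ge>0. K \<inter> A = cball c r \<inter> A)" using sec by metis
    moreover have "x \<in> K \<inter> A" "y \<in> A" using that by (simp_all add: A_def)
    ultimately obtain r where r: "K \<inter> A = cball c r \<inter> A" by blast
    have dist_c: "dist c z = sqrt (z \<bullet> z - (x \<bullet> e)\<^sup>2)" if "z \<in> A" for z
      using that ee
      by (simp add: A_def dist_norm norm_eq_sqrt_inner c_def inner_diff_left inner_diff_right
          inner_commute power2_eq_square)
    have "x \<in> cball c r" using r \<open>x \<in> K \<inter> A\<close> by blast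
    moreover have "dist c y = dist c x"
      using dist_c \<open>y \<in> A\<close> \<open>x \<in> K \<inter> A\<close> that(3) by (simp add: norm_eq_sqrt_inner)
    ultimately have "y \<in> cball c r \<inter> A" using \<open>y \<in> A\<close> by simp
    then show ?thesis using r by blast
  qed
  then show ?thesis
    using that \<open>norm e = 1\<close> oc unfolding rotation_invariant_def by blast
qed

lemma symmetric_convex_body_zero_interior:
  assumes "symmetric_convex_body K"
  shows "0 \<in> interior K"
proof -
  have "convex K" and "interior K \<noteq> {}" and sym: "\<And>x. x \<in> K \<Longrightarrow> - x \<in> K"
    using assms unfolding symmetric_convex_body_def by auto
  then obtain x where x: "x \<in> interior K" by blast
  have "uminus ` K = K" using sym by (auto simp: image_iff) (metis minus_minus sym)
  then have "- x \<in> interior K" using x interior_negations[of K] by (metis image_eqI)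
  then have "(1/2) *\<^sub>R x + (1/2) *\<^sub>R (- x) \<in> interior K"
    using x convexD[OF convex_interior[OF \<open>convex K\<close>], of x "-x" "1/2" "1/2"] by simp
  then show ?thesis by simp
qed

lemma hyperplane_of_revolutionE:
  fixes K :: "'a::euclidean_space set"
  assumes "hyperplane_of_revolution K H"
  obtains T :: "'a \<Rightarrow> 'a" and K0 e where "linear T" "bij T"
    "compact K0" "convex K0" "0 \<in> interior K0" "norm e = 1" "rotation_invariant K0 e"
    "K = T ` K0" "H = T ` {x. x \<bullet> e = 0}"
proof -
  obtain T :: "'a \<Rightarrow> 'a" and K0 L where "linear T" "bij T" "symmetric_convex_body K0"
    "axis_of_revolution K0 L" "K = T ` K0" "H = T ` orthogonal_comp L"
    using assms unfolding hyperplane_of_revolution_def by blast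
  moreover obtain e where "norm e = 1" "orthogonal_comp L = {x. x \<bullet> e = 0}" "rotation_invariant K0 e"
    using axis_of_revolutionE[OF \<open>axis_of_revolution K0 L\<close>] by blast
  ultimately show ?thesis
    using that symmetric_convex_body_zero_interior unfolding symmetric_convex_body_def by metis
qed

lemma radial_profile_ball:
  fixes K C :: "'a::real_normed_vector set"
  assumes "compact K" "convex K" "0 \<in> interior K" "norm w = 1"
    and cone: "\<And>x t. x \<in> C \<Longrightarrow> t > 0 \<Longrightarrow> t *\<^sub>R x \<in> C"
    and radial: "\<And>x t. x \<in> C \<Longrightarrow> norm x = 1 \<Longrightarrow> t \<ge> 0 \<Longrightarrow> t *\<^sub>R x \<in> K \<longleftrightarrow> t *\<^sub>R w \<in> K"
  obtains R where "R > 0" "\<And>x. x \<in> C \<Longrightarrow> x \<in> K \<longleftrightarrow> norm x \<le> R"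
proof -
  define S where "S = {t. t \<ge> 0 \<and> t *\<^sub>R w \<in> K}"
  have "0 \<in> K" using assms(3) interior_subset by blast
  obtain \<epsilon> where \<epsilon>: "\<epsilon> > 0" "ball 0 \<epsilon> \<subseteq> K" using assms(3) by (meson mem_interior)
  then have "\<epsilon> / 2 \<in> S" using assms(4) by (auto simp: S_def)
  obtain M where M: "\<And>x. x \<in> K \<Longrightarrow> norm x \<le> M"
    using compact_imp_bounded[OF assms(1)] by (meson bounded_iff)
  have "t \<le> M" if "t \<in> S" for t
    using M[of "t *\<^sub>R w"] that assms(4) by (simp add: S_def)
  then have bdd: "bdd_above S" by (auto simp: bdd_above_def)
  have "closed ((\<lambda>t::real. t *\<^sub>R w) -` K)"
    by (intro closed_vimage compact_imp_closed assms(1) continuous_intros)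
  moreover have "S = {0..} \<inter> (\<lambda>t. t *\<^sub>R w) -` K" by (auto simp: S_def)
  ultimately have "closed S" by (simp add: closed_Int)
  define R where "R = Sup S"
  have "R \<in> S" unfolding R_def using closed_contains_Sup[OF _ bdd \<open>closed S\<close>] \<open>\<epsilon> / 2 \<in> S\<close> by blast
  have "R > 0" using cSup_upper[OF \<open>\<epsilon> / 2 \<in> S\<close> bdd] \<epsilon> by (simp add: R_def)
  have S_iff: "t \<in> S \<longleftrightarrow> 0 \<le> t \<and> t \<le> R" for t
  proof
    assume "0 \<le> t \<and> t \<le> R"
    moreover have "R *\<^sub>R w \<in> K" using \<open>R \<in> S\<close> by (simp add: S_def)
    ultimately have "(t / R) *\<^sub>R (R *\<^sub>R w) + (1 - t / R) *\<^sub>R 0 \<in> K"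
      using convexD[OF assms(2) _ \<open>0 \<in> K\<close>, of "R *\<^sub>R w" "t / R" "1 - t / R"] \<open>R > 0\<close>
      by simp
    then show "t \<in> S" using \<open>0 \<le> t \<and> t \<le> R\<close> \<open>R > 0\<close> by (simp add: S_def)
  qed (use cSup_upper[OF _ bdd] in \<open>auto simp: S_def R_def\<close>)
  have "x \<in> K \<longleftrightarrow> norm x \<le> R" if "x \<in> C" for x
  proof (cases "x = 0")
    case True
    then show ?thesis using \<open>0 \<in> K\<close> \<open>R > 0\<close> by simp
  next
    case False
    have "x /\<^sub>R norm x \<in> C" using cone[OF that] False by simp
    then have "x \<in> K \<longleftrightarrow> norm x *\<^sub>R w \<in> K"
      using radial[of "x /\<^sub>R norm x" "norm x"] False by simp
    also have "\<dots> \<longleftrightarrow> norm x \<le> R" using S_iff[of "norm x"] by (simp add: S_def)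
    finally show ?thesis .
  qed
  then show ?thesis using that \<open>R > 0\<close> by blast
qed

lemma rotation_invariant_central_section:
  fixes K :: "'a::euclidean_space set"
  assumes "DIM('a) \<ge> 2" "compact K" "convex K" "0 \<in> interior K" "rotation_invariant K e"
  obtains r where "r > 0" "\<And>x. x \<bullet> e = 0 \<Longrightarrow> x \<in> K \<longleftrightarrow> norm x \<le> r"
proof -
  obtain w0 where "w0 \<noteq> 0" "orthogonal e w0" using orthogonal_to_vector_exists[OF assms(1)] by blast
  define w where "w = w0 /\<^sub>R norm w0"
  have w: "norm w = 1" "w \<bullet> e = 0"
    using \<open>w0 \<noteq> 0\<close> \<open>orthogonal e w0\<close> by (auto simp: w_def orthogonal_def inner_commute)
  have cone: "\<And>x t. x \<in> {x. x \<bullet> e = 0} \<Longrightarrow> t > 0 \<Longrightarrow> t *\<^sub>R x \<in> {x. x \<bullet> e = 0}"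
    by simp
  have radial: "t *\<^sub>R x \<in> K \<longleftrightarrow> t *\<^sub>R w \<in> K"
    if "x \<in> {x. x \<bullet> e = 0}" "norm x = 1" for x t
    using that w by (intro rotation_invariant_scaleR_iff[OF assms(5)]) simp_all
  obtain r where "r > 0" "\<And>x. x \<in> {x. x \<bullet> e = 0} \<Longrightarrow> x \<in> K \<longleftrightarrow> norm x \<le> r"
    using radial_profile_ball[OF assms(2-4) w(1) cone radial] by blast
  then show ?thesis using that by simp
qed

section \<open>Two axes of revolution give a ball\<close>

locale two_rotation_axes =
  fixes K :: "'a::euclidean_space set" and e d w :: 'a
  assumes compact: "compact K" and convex: "convex K" and zero_interior: "0 \<in> interior K"
    and unit_e: "norm e = 1" and unit_d: "norm d = 1" and not_parallel: "\<bar>e \<bullet> d\<bar> < 1"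
    and unit_w: "norm w = 1" and w_orth_e: "w \<bullet> e = 0" and w_orth_d: "w \<bullet> d = 0"
    and invariant_e: "rotation_invariant K e" and invariant_d: "rotation_invariant K d"
begin

definition meridian :: "real \<Rightarrow> 'a" where
  "meridian a = a *\<^sub>R e + sqrt (1 - a\<^sup>2) *\<^sub>R w"

lemma meridian_inner_e: "meridian a \<bullet> e = a"
  using unit_e w_orth_e by (simp add: meridian_def inner_add_left norm_eq_1)

lemma norm_meridian: "\<bar>a\<bar> \<le> 1 \<Longrightarrow> norm (meridian a) = 1"
  unfolding meridian_def using norm_orthogonal_unit_combination unit_e unit_w w_orth_e by blast

text \<open>The rotation about \<open>d\<close> followed by the rotation about \<open>e\<close> moves the meridian point of
  height \<open>a\<close> to the one of height \<open>(e \<bullet> d)\<^sup>2 a\<close>.\<close>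
lemma meridian_step:
  assumes "\<bar>a\<bar> \<le> 1"
  shows "t *\<^sub>R meridian a \<in> K \<longleftrightarrow> t *\<^sub>R meridian ((e \<bullet> d)\<^sup>2 * a) \<in> K"
proof -
  define c where "c = e \<bullet> d"
  have "\<bar>c\<bar> \<le> 1" using not_parallel by (simp add: c_def)
  then have ac: "\<bar>a * c\<bar> \<le> 1" "\<bar>c\<^sup>2 * a\<bar> \<le> 1"
    using assms by (auto simp: abs_mult abs_square_le_1 mult_le_one)
  define y where "y = (a * c) *\<^sub>R d + sqrt (1 - (a * c)\<^sup>2) *\<^sub>R w"
  have "norm y = 1" unfolding y_def
    using norm_orthogonal_unit_combination unit_d unit_w w_orth_d ac(1) by blast
  have "y \<bullet> d = a * c" using unit_d w_orth_d by (simp add: y_def inner_add_left norm_eq_1)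
  have "y \<bullet> e = (a * c) * (d \<bullet> e)"
    using w_orth_e by (simp add: y_def inner_add_left)
  then have "y \<bullet> e = c\<^sup>2 * a"
    by (simp add: c_def inner_commute[of d e] power2_eq_square)
  have "meridian a \<bullet> d = a * c"
    using w_orth_d by (simp add: meridian_def inner_add_left c_def)
  have "t *\<^sub>R meridian a \<in> K \<longleftrightarrow> t *\<^sub>R y \<in> K"
    by (rule rotation_invariant_scaleR_iff[OF invariant_d])
      (use \<open>y \<bullet> d = a * c\<close> \<open>meridian a \<bullet> d = a * c\<close> \<open>norm y = 1\<close> norm_meridian assms in auto)
  also have "\<dots> \<longleftrightarrow> t *\<^sub>R meridian (c\<^sup>2 * a) \<in> K"
    by (rule rotation_invariant_scaleR_iff[OF invariant_e])
      (use \<open>y \<bullet> e = c\<^sup>2 * a\<close> meridian_inner_e \<open>norm y = 1\<close> norm_meridian ac(2) in auto)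
  finally show ?thesis by (simp add: c_def)
qed

lemma meridian_iterate:
  assumes "\<bar>a\<bar> \<le> 1"
  shows "t *\<^sub>R meridian a \<in> K \<longleftrightarrow> t *\<^sub>R meridian (((e \<bullet> d)\<^sup>2)^k * a) \<in> K"
proof (induction k)
  case (Suc k)
  have "((e \<bullet> d)\<^sup>2)^k \<le> 1"
    using not_parallel by (simp add: power_le_one abs_square_le_1 less_imp_le)
  then have "\<bar>((e \<bullet> d)\<^sup>2)^k * a\<bar> \<le> 1"
    using assms by (simp add: abs_mult mult_le_one)
  from meridian_step[OF this, of t] Suc show ?case by (simp add: mult.assoc)
qed simp

lemma meridian_tendsto: "(\<lambda>k. meridian (((e \<bullet> d)\<^sup>2)^k * a)) \<longlonglongrightarrow> w"
proof -
  have "(\<lambda>k. ((e \<bullet> d)\<^sup>2)^k * a) \<longlonglongrightarrow> 0"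
    by (intro tendsto_mult_left_zero LIMSEQ_power_zero) (use not_parallel in \<open>simp add: abs_square_less_1\<close>)
  then have "(\<lambda>k. meridian (((e \<bullet> d)\<^sup>2)^k * a)) \<longlonglongrightarrow> 0 *\<^sub>R e + sqrt (1 - 0\<^sup>2) *\<^sub>R w"
    unfolding meridian_def by (intro tendsto_intros)
  then show ?thesis by simp
qed

lemma meridian_mem_imp_pole_mem:
  assumes "\<bar>a\<bar> \<le> 1" "t *\<^sub>R meridian a \<in> K"
  shows "t *\<^sub>R w \<in> K"
proof -
  have "\<forall>k. t *\<^sub>R meridian (((e \<bullet> d)\<^sup>2)^k * a) \<in> K"
    using assms meridian_iterate by blast
  moreover have lim: "(\<lambda>k. t *\<^sub>R meridian (((e \<bullet> d)\<^sup>2)^k * a)) \<longlonglongrightarrow> t *\<^sub>R w"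
    by (intro tendsto_intros meridian_tendsto)
  ultimately show ?thesis
    using Lim_in_closed_set[OF compact_imp_closed[OF compact] _ _ lim] by simp
qed

lemma pole_interior_imp_meridian_mem:
  assumes "\<bar>a\<bar> \<le> 1" "t *\<^sub>R w \<in> interior K"
  shows "t *\<^sub>R meridian a \<in> K"
proof -
  have "(\<lambda>k. t *\<^sub>R meridian (((e \<bullet> d)\<^sup>2)^k * a)) \<longlonglongrightarrow> t *\<^sub>R w"
    by (intro tendsto_intros meridian_tendsto)
  then have "\<forall>\<^sub>F k in sequentially. t *\<^sub>R meridian (((e \<bullet> d)\<^sup>2)^k * a) \<in> interior K"
    using topological_tendstoD[OF _ open_interior assms(2)] by blast
  then obtain k where "t *\<^sub>R meridian (((e \<bullet> d)\<^sup>2)^k * a) \<in> interior K"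
    unfolding eventually_sequentially by blast
  then show ?thesis using interior_subset meridian_iterate[OF assms(1)] by blast
qed

lemma radial_iff:
  assumes "norm x = 1" "t \<ge> 0"
  shows "t *\<^sub>R x \<in> K \<longleftrightarrow> t *\<^sub>R w \<in> K"
proof -
  define a where "a = x \<bullet> e"
  have a: "\<bar>a\<bar> \<le> 1" using Cauchy_Schwarz_ineq2[of x e] assms(1) unit_e by (simp add: a_def)
  have x_iff: "s *\<^sub>R x \<in> K \<longleftrightarrow> s *\<^sub>R meridian a \<in> K" for s
    by (rule rotation_invariant_scaleR_iff[OF invariant_e])
      (use meridian_inner_e norm_meridian[OF a] assms(1) in \<open>auto simp: a_def\<close>)
  show ?thesis
  proof
    assume "t *\<^sub>R x \<in> K"
    then show "t *\<^sub>R w \<in> K" using meridian_mem_imp_pole_mem[OF a] x_iff by blast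
  next
    assume "t *\<^sub>R w \<in> K"
    have "s *\<^sub>R x \<in> K" if "0 < s" "s < t" for s
    proof -
      have "t *\<^sub>R w - (1 - s / t) *\<^sub>R (t *\<^sub>R w - 0) \<in> interior K"
        by (rule mem_interior_convex_shrink[OF convex zero_interior \<open>t *\<^sub>R w \<in> K\<close>])
          (use that in auto)
      then have "s *\<^sub>R w \<in> interior K" using that by (simp add: algebra_simps)
      then show ?thesis using pole_interior_imp_meridian_mem[OF a] x_iff by blast
    qed
    then show "t *\<^sub>R x \<in> K"
      using closed_scaleR_limit[OF compact_imp_closed[OF compact]] assms(2) zero_interior
        interior_subset by (cases "t = 0") auto
  qed
qed

end

lemma rotation_invariant_two_axes_ball:
  fixes K :: "'a::euclidean_space set"
  assumes "DIM('a) \<ge> 3" "compact K" "convex K" "0 \<in> interior K"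
    and "norm e = 1" "norm d = 1" "\<bar>e \<bullet> d\<bar> < 1"
    and "rotation_invariant K e" "rotation_invariant K d"
  obtains R where "R > 0" "K = cball 0 R"
proof -
  obtain w where w: "norm w = 1" "w \<bullet> e = 0" "w \<bullet> d = 0"
    using exists_orthogonal_to_two[OF assms(1)] by blast
  interpret two_rotation_axes K e d w
    using assms w by unfold_locales
  have cone: "\<And>x t. x \<in> UNIV \<Longrightarrow> t > 0 \<Longrightarrow> t *\<^sub>R x \<in> UNIV" by simp
  have radial: "\<And>x t. x \<in> UNIV \<Longrightarrow> norm x = 1 \<Longrightarrow> t \<ge> 0 \<Longrightarrow> t *\<^sub>R x \<in> K \<longleftrightarrow> t *\<^sub>R w \<in> K"
    using radial_iff by blast
  obtain R where R: "R > 0" "\<And>x. x \<in> UNIV \<Longrightarrow> x \<in> K \<longleftrightarrow> norm x \<le> R"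
    using radial_profile_ball[OF assms(2-4) w(1) cone radial] by blast
  have "K = cball 0 R"
  proof (intro set_eqI)
    show "x \<in> K \<longleftrightarrow> x \<in> cball 0 R" for x using R(2)[of x] by (simp add: dist_norm)
  qed
  then show ?thesis using that R(1) by blast
qed

section \<open>Oblique sections and quadratic forms\<close>

context
  fixes B :: "'a::euclidean_space \<Rightarrow> 'b::real_inner" and e \<nu> :: 'a
  assumes linear_B: "linear B"
    and norm_B_invariant: "\<And>x y. x \<bullet> \<nu> = 0 \<Longrightarrow> y \<bullet> \<nu> = 0 \<Longrightarrow> y \<bullet> e = x \<bullet> e \<Longrightarrow> norm y = norm x
      \<Longrightarrow> norm (B y) = norm (B x)"
begin

text \<open>Reflecting \<open>w\<close> fixes the height and the norm of \<open>w + v\<close>.\<close>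
lemma hyperplane_orthogonal_image_orthogonal:
  assumes "v \<bullet> \<nu> = 0" "w \<bullet> v = 0" "w \<bullet> e = 0" "w \<bullet> \<nu> = 0"
  shows "B w \<bullet> B v = 0"
proof -
  have "(- w + v) \<bullet> (- w + v) = (w + v) \<bullet> (w + v)"
    using assms(2)
    by (simp add: inner_add_left inner_add_right inner_diff_left inner_diff_right inner_commute[of v w])
  then have "norm (B (- w + v)) = norm (B (w + v))"
    using assms by (intro norm_B_invariant) (simp_all add: inner_add_left inner_diff_left norm_eq_sqrt_inner)
  then have "B (- w + v) \<bullet> B (- w + v) = B (w + v) \<bullet> B (w + v)"
    by (simp add: norm_eq_sqrt_inner)
  then show ?thesis
    by (simp add: linear_add[OF linear_B] linear_diff[OF linear_B] inner_add_left inner_add_right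
        inner_diff_left inner_diff_right inner_commute[of "B v" "B w"])
qed

lemma hyperplane_equator_norm:
  assumes "norm u = 1" "u \<bullet> e = 0" "u \<bullet> \<nu> = 0" "w \<bullet> e = 0" "w \<bullet> \<nu> = 0"
  shows "(norm (B w))\<^sup>2 = (norm w)\<^sup>2 * (norm (B u))\<^sup>2"
proof -
  have "norm (B (norm w *\<^sub>R u)) = norm (B w)"
    by (rule norm_B_invariant) (use assms in simp_all)
  then show ?thesis
    by (simp add: linear_scale[OF linear_B] flip: power_mult_distrib)
qed

lemma rotation_invariant_quadratic_on_hyperplane:
  assumes "DIM('a) \<ge> 3" "inj B"
    and v: "v \<bullet> \<nu> = 0" "v \<bullet> e = 1" "\<And>w. w \<bullet> e = 0 \<Longrightarrow> w \<bullet> \<nu> = 0 \<Longrightarrow> w \<bullet> v = 0"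
  obtains \<kappa> \<beta> where "\<kappa> > 0"
    "\<And>x. x \<bullet> \<nu> = 0 \<Longrightarrow> (norm (B x))\<^sup>2 = \<kappa> * ((norm x)\<^sup>2 + \<beta> * (x \<bullet> e)\<^sup>2)"
proof -
  obtain u where u: "norm u = 1" "u \<bullet> e = 0" "u \<bullet> \<nu> = 0"
    using exists_orthogonal_to_two[OF assms(1)] by blast
  define \<kappa> where "\<kappa> = (norm (B u))\<^sup>2"
  have "u \<noteq> 0" using u by auto
  then have "B u \<noteq> 0" using assms(2) linear_0[OF linear_B] by (metis injD)
  then have "\<kappa> > 0" by (simp add: \<kappa>_def)
  define \<beta> where "\<beta> = ((norm (B v))\<^sup>2 - \<kappa> * (norm v)\<^sup>2) / \<kappa>"
  have "(norm (B x))\<^sup>2 = \<kappa> * ((norm x)\<^sup>2 + \<beta> * (x \<bullet> e)\<^sup>2)" if "x \<bullet> \<nu> = 0" for x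
  proof -
    define t where "t = x \<bullet> e"
    define w where "w = x - t *\<^sub>R v"
    have w: "w \<bullet> e = 0" "w \<bullet> \<nu> = 0" using that v by (simp_all add: w_def t_def inner_diff_left)
    have x: "x = w + t *\<^sub>R v" by (simp add: w_def)
    have "(norm x)\<^sup>2 = (norm w)\<^sup>2 + t\<^sup>2 * (norm v)\<^sup>2"
      using v(3)[OF w] unfolding x
      by (simp add: norm_add_Pythagorean orthogonal_def power_mult_distrib)
    moreover have "(norm (B x))\<^sup>2 = (norm w)\<^sup>2 * \<kappa> + t\<^sup>2 * (norm (B v))\<^sup>2"
      using hyperplane_orthogonal_image_orthogonal[OF v(1) v(3)[OF w] w]
        hyperplane_equator_norm[OF u w] unfolding x
      by (simp add: linear_add[OF linear_B] linear_scale[OF linear_B] norm_add_Pythagorean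
          orthogonal_def \<kappa>_def power_mult_distrib)
    ultimately show ?thesis
      using \<open>\<kappa> > 0\<close> by (simp add: \<beta>_def t_def field_simps)
  qed
  then show ?thesis using that[OF \<open>\<kappa> > 0\<close>] by blast
qed

end

lemma rotate_into_hyperplane:
  fixes e \<nu> :: "'a::euclidean_space"
  assumes "DIM('a) \<ge> 3"
    and v: "v \<bullet> \<nu> = 0" "v \<bullet> e = 1" "\<And>w. w \<bullet> e = 0 \<Longrightarrow> w \<bullet> \<nu> = 0 \<Longrightarrow> w \<bullet> v = 0"
    and "(x \<bullet> e)\<^sup>2 * (norm v)\<^sup>2 \<le> (norm x)\<^sup>2"
  obtains y where "y \<bullet> \<nu> = 0" "y \<bullet> e = x \<bullet> e" "norm y = norm x"
proof -
  obtain u where u: "norm u = 1" "u \<bullet> e = 0" "u \<bullet> \<nu> = 0"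
    using exists_orthogonal_to_two[OF assms(1)] by blast
  define t where "t = x \<bullet> e"
  define s where "s = sqrt ((norm x)\<^sup>2 - t\<^sup>2 * (norm v)\<^sup>2)"
  have s2: "s\<^sup>2 = (norm x)\<^sup>2 - t\<^sup>2 * (norm v)\<^sup>2" using assms(5) by (simp add: s_def t_def)
  define y where "y = t *\<^sub>R v + s *\<^sub>R u"
  have "u \<bullet> v = 0" "u \<bullet> u = 1" using v(3) u by (simp_all add: norm_eq_1)
  moreover have "y \<bullet> y = t * t * (v \<bullet> v) + s * s * (u \<bullet> u) + 2 * t * s * (u \<bullet> v)"
    by (simp add: y_def inner_add_left inner_add_right inner_commute[of v u] algebra_simps)
  ultimately have "(norm y)\<^sup>2 = (norm x)\<^sup>2"
    using s2 by (simp add: dot_square_norm power2_eq_square)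
  then have "norm y = norm x" by (simp add: power2_eq_iff_nonneg)
  moreover have "y \<bullet> \<nu> = 0" "y \<bullet> e = x \<bullet> e"
    using v u by (simp_all add: y_def inner_add_left t_def)
  ultimately show ?thesis using that by blast
qed

text \<open>The cone \<open>(x \<bullet> e)\<^sup>2 V \<le> |x|\<^sup>2\<close> consists of the points that a rotation about \<open>e\<close> moves
  into \<open>\<nu>\<^sup>\<bottom>\<close>.\<close>
lemma rotation_invariant_section_quadratic:
  fixes K :: "'a::euclidean_space set" and B :: "'a \<Rightarrow> 'b::real_inner"
  assumes "DIM('a) \<ge> 3" "linear B" "inj B" "rotation_invariant K e"
    and slice: "\<And>x. x \<bullet> \<nu> = 0 \<Longrightarrow> x \<in> K \<longleftrightarrow> norm (B x) \<le> r" and "r > 0"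
    and "x0 \<bullet> \<nu> = 0" "x0 \<bullet> e \<noteq> 0"
  obtains V \<kappa> \<beta> where "\<kappa> > 0"
    "\<And>x. (x \<bullet> e)\<^sup>2 * V \<le> (norm x)\<^sup>2 \<Longrightarrow> x \<in> K \<longleftrightarrow> \<kappa> * ((norm x)\<^sup>2 + \<beta> * (x \<bullet> e)\<^sup>2) \<le> r\<^sup>2"
proof -
  obtain v where v: "v \<bullet> \<nu> = 0" "v \<bullet> e = 1" "\<And>w. w \<bullet> e = 0 \<Longrightarrow> w \<bullet> \<nu> = 0 \<Longrightarrow> w \<bullet> v = 0"
    using exists_unit_height_in_hyperplane[OF assms(7,8)] by blast
  have "norm (B y) = norm (B x)"
    if "x \<bullet> \<nu> = 0" "y \<bullet> \<nu> = 0" "y \<bullet> e = x \<bullet> e" "norm y = norm x" for x y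
  proof (rule nonneg_eq_if_scaled_le_iff[OF norm_ge_zero norm_ge_zero \<open>r > 0\<close>])
    fix t :: real
    assume "t > 0"
    have "t *\<^sub>R y \<in> K \<longleftrightarrow> t *\<^sub>R x \<in> K"
      using rotation_invariant_scaleR_iff[OF assms(4) that(3,4)] by simp
    then show "t * norm (B y) \<le> r \<longleftrightarrow> t * norm (B x) \<le> r"
      using slice[of "t *\<^sub>R x"] slice[of "t *\<^sub>R y"] that(1,2) \<open>t > 0\<close>
      by (simp add: linear_scale[OF assms(2)])
  qed
  then obtain \<kappa> \<beta> where "\<kappa> > 0"
    and quadratic: "\<And>x. x \<bullet> \<nu> = 0 \<Longrightarrow> (norm (B x))\<^sup>2 = \<kappa> * ((norm x)\<^sup>2 + \<beta> * (x \<bullet> e)\<^sup>2)"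
    using rotation_invariant_quadratic_on_hyperplane[OF assms(2) _ assms(1,3) v] by blast
  have "x \<in> K \<longleftrightarrow> \<kappa> * ((norm x)\<^sup>2 + \<beta> * (x \<bullet> e)\<^sup>2) \<le> r\<^sup>2"
    if cone: "(x \<bullet> e)\<^sup>2 * (norm v)\<^sup>2 \<le> (norm x)\<^sup>2" for x
  proof -
    obtain y where y: "y \<bullet> \<nu> = 0" "y \<bullet> e = x \<bullet> e" "norm y = norm x"
      using rotate_into_hyperplane[OF assms(1) v cone] by blast
    have "x \<in> K \<longleftrightarrow> y \<in> K"
      using rotation_invariant_scaleR_iff[OF assms(4) y(2,3), of 1] by simp
    also have "\<dots> \<longleftrightarrow> (norm (B y))\<^sup>2 \<le> r\<^sup>2"
      using slice[OF y(1)] \<open>r > 0\<close> by (simp add: abs_le_square_iff[symmetric])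
    also have "\<dots> \<longleftrightarrow> \<kappa> * ((norm x)\<^sup>2 + \<beta> * (x \<bullet> e)\<^sup>2) \<le> r\<^sup>2"
      using quadratic[OF y(1)] y(2,3) by simp
    finally show ?thesis .
  qed
  then show ?thesis using that \<open>\<kappa> > 0\<close> by blast
qed

lemma cone_description_nonneg:
  fixes K C :: "'a::real_normed_vector set"
  assumes "bounded K" "\<And>x t. x \<in> C \<Longrightarrow> t > 0 \<Longrightarrow> t *\<^sub>R x \<in> C"
    and "\<And>x t. F (t *\<^sub>R x) = t\<^sup>2 * F x" "\<And>x. x \<in> C \<Longrightarrow> x \<in> K \<longleftrightarrow> F x \<le> 1" "x \<in> C"
  shows "F x \<ge> 0"
proof (rule ccontr)
  assume "\<not> F x \<ge> 0"
  moreover have "F 0 = 0" using assms(3)[of 0 0] by simp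
  ultimately have "x \<noteq> 0" by auto
  obtain M where M: "\<And>y. y \<in> K \<Longrightarrow> norm y \<le> M" using assms(1) by (auto simp: bounded_iff)
  define t where "t = (\<bar>M\<bar> + 1) / norm x"
  have "t > 0" using \<open>x \<noteq> 0\<close> by (simp add: t_def)
  have "t\<^sup>2 * F x \<le> 0" using \<open>\<not> F x \<ge> 0\<close> by (intro mult_nonneg_nonpos) auto
  then have "t *\<^sub>R x \<in> K"
    using assms(2-5) \<open>t > 0\<close> by simp
  then have "norm (t *\<^sub>R x) \<le> M" by (rule M)
  moreover have "norm (t *\<^sub>R x) = \<bar>M\<bar> + 1" using \<open>t > 0\<close> \<open>x \<noteq> 0\<close> by (simp add: t_def)
  ultimately show False by linarith
qed

text \<open>Both functions are the square of the gauge of \<open>K\<close> on the cone.\<close>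
lemma cone_description_unique:
  fixes K C :: "'a::real_normed_vector set"
  assumes "bounded K" "\<And>x t. x \<in> C \<Longrightarrow> t > 0 \<Longrightarrow> t *\<^sub>R x \<in> C"
    and "\<And>x t. F (t *\<^sub>R x) = t\<^sup>2 * F x" "\<And>x t. G (t *\<^sub>R x) = t\<^sup>2 * G x"
    and "\<And>x. x \<in> C \<Longrightarrow> x \<in> K \<longleftrightarrow> F x \<le> 1" "\<And>x. x \<in> C \<Longrightarrow> x \<in> K \<longleftrightarrow> G x \<le> 1"
    and "x \<in> C"
  shows "F x = G x"
proof (rule nonneg_eq_if_scaled_le_iff)
  show "F x \<ge> 0" "G x \<ge> 0"
    using cone_description_nonneg[OF assms(1,2)] assms(3-7) by blast+
  fix s :: real
  assume "s > 0"
  then have "sqrt s *\<^sub>R x \<in> C" using assms(2,7) by simp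
  then show "s * F x \<le> 1 \<longleftrightarrow> s * G x \<le> 1"
    using assms(3-6) \<open>s > 0\<close> by (metis less_eq_real_def real_sqrt_pow2)
qed simp

lemma quadratic_eq_if_eq_on_open:
  fixes F G :: "'a::real_normed_vector \<Rightarrow> real"
  assumes F: "\<And>x y s. F (x + s *\<^sub>R y) = F x + 2 * s * P x y + s\<^sup>2 * F y"
    and G: "\<And>x y s. G (x + s *\<^sub>R y) = G x + 2 * s * Q x y + s\<^sup>2 * G y"
    and "open U" "w \<in> U" "\<And>x. x \<in> U \<Longrightarrow> F x = G x"
  shows "F y = G y"
proof -
  obtain \<delta> where "\<delta> > 0" "ball w \<delta> \<subseteq> U" using assms(3,4) by (meson openE)
  define s where "s = \<delta> / (2 * (norm y + 1))"
  have "norm y + 1 > 0" using norm_ge_zero[of y] by linarith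
  then have "s > 0" using \<open>\<delta> > 0\<close> by (simp add: s_def)
  have "s * norm y < \<delta>"
  proof -
    have "s * norm y \<le> s * (norm y + 1)" using \<open>s > 0\<close> by simp
    also have "\<dots> = \<delta> / 2" using \<open>norm y + 1 > 0\<close> by (simp add: s_def field_simps)
    finally show ?thesis using \<open>\<delta> > 0\<close> by simp
  qed
  then have "w + s *\<^sub>R y \<in> U" "w + (- s) *\<^sub>R y \<in> U" "w \<in> U"
    using \<open>ball w \<delta> \<subseteq> U\<close> \<open>s > 0\<close> \<open>\<delta> > 0\<close> by (auto simp: dist_norm subset_iff)
  text \<open>The even part of \<open>s \<mapsto> F (w + s y)\<close> isolates \<open>F y\<close>.\<close>
  then have "F (w + s *\<^sub>R y) + F (w + (- s) *\<^sub>R y) - 2 * F w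
      = G (w + s *\<^sub>R y) + G (w + (- s) *\<^sub>R y) - 2 * G w"
    using assms(5) by simp
  then have "s\<^sup>2 * F y = s\<^sup>2 * G y" unfolding F G by simp
  then show ?thesis using \<open>s > 0\<close> by simp
qed

lemma two_cone_quadratics_coincide:
  fixes K :: "'a::euclidean_space set" and B :: "'a \<Rightarrow> 'b::real_inner"
  assumes "bounded K" "linear B" "w \<noteq> 0" "B w \<noteq> 0" "w \<bullet> e = 0" "B w \<bullet> m = 0"
    and cone1: "\<And>x. (x \<bullet> e)\<^sup>2 * V1 \<le> (norm x)\<^sup>2 \<Longrightarrow>
      x \<in> K \<longleftrightarrow> \<kappa>1 * ((norm x)\<^sup>2 + \<beta>1 * (x \<bullet> e)\<^sup>2) \<le> 1"
    and cone2: "\<And>x. (B x \<bullet> m)\<^sup>2 * V2 \<le> (norm (B x))\<^sup>2 \<Longrightarrow>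
      x \<in> K \<longleftrightarrow> \<kappa>2 * ((norm (B x))\<^sup>2 + \<beta>2 * (B x \<bullet> m)\<^sup>2) \<le> 1"
  shows "\<kappa>1 * ((norm x)\<^sup>2 + \<beta>1 * (x \<bullet> e)\<^sup>2) = \<kappa>2 * ((norm (B x))\<^sup>2 + \<beta>2 * (B x \<bullet> m)\<^sup>2)"
proof -
  define F where "F x = \<kappa>1 * ((norm x)\<^sup>2 + \<beta>1 * (x \<bullet> e)\<^sup>2)" for x
  define G where "G x = \<kappa>2 * ((norm (B x))\<^sup>2 + \<beta>2 * (B x \<bullet> m)\<^sup>2)" for x
  define C where "C = {x. (x \<bullet> e)\<^sup>2 * V1 \<le> (norm x)\<^sup>2 \<and> (B x \<bullet> m)\<^sup>2 * V2 \<le> (norm (B x))\<^sup>2}"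
  define U where "U = {x. (x \<bullet> e)\<^sup>2 * V1 < (norm x)\<^sup>2 \<and> (B x \<bullet> m)\<^sup>2 * V2 < (norm (B x))\<^sup>2}"
  have F: "F (x + s *\<^sub>R y) = F x + 2 * s * (\<kappa>1 * (x \<bullet> y + \<beta>1 * (x \<bullet> e) * (y \<bullet> e))) + s\<^sup>2 * F y"
    for x y s
    unfolding F_def power2_norm_eq_inner
    by (simp add: inner_add_left inner_add_right inner_commute algebra_simps power2_eq_square)
  have G: "G (x + s *\<^sub>R y)
      = G x + 2 * s * (\<kappa>2 * (B x \<bullet> B y + \<beta>2 * (B x \<bullet> m) * (B y \<bullet> m))) + s\<^sup>2 * G y" for x y s
    unfolding G_def power2_norm_eq_inner linear_add[OF assms(2)] linear_scale[OF assms(2)]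
    by (simp add: inner_add_left inner_add_right inner_commute algebra_simps power2_eq_square)
  have homogeneous: "F (t *\<^sub>R x) = t\<^sup>2 * F x" "G (t *\<^sub>R x) = t\<^sup>2 * G x" for t x
    using F[of 0 t x] G[of 0 t x] linear_0[OF assms(2)] by (simp_all add: F_def G_def)
  have cone: "t *\<^sub>R x \<in> C" if "x \<in> C" "t > 0" for x t
    using that by (simp add: C_def linear_scale[OF assms(2)] power_mult_distrib
        mult.assoc[symmetric] mult.commute[of "t\<^sup>2"])
  have FG: "F x = G x" if "x \<in> C" for x
  proof (rule cone_description_unique[OF assms(1) cone homogeneous _ _ that])
    show "y \<in> K \<longleftrightarrow> F y \<le> 1" if "y \<in> C" for y
      using cone1 that by (simp add: C_def F_def)
    show "y \<in> K \<longleftrightarrow> G y \<le> 1" if "y \<in> C" for y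
      using cone2 that by (simp add: C_def G_def)
  qed
  have "open U"
    using linear_continuous_on[OF linear_conv_bounded_linear[THEN iffD1, OF assms(2)]]
    unfolding U_def by (intro open_Collect_conj open_Collect_less continuous_intros) auto
  moreover have "w \<in> U" using assms(3-6) by (simp add: U_def)
  moreover have "U \<subseteq> C" by (auto simp: U_def C_def less_imp_le)
  ultimately have "F x = G x"
    using quadratic_eq_if_eq_on_open[OF F G] FG by blast
  then show ?thesis by (simp add: F_def G_def)
qed

lemma rotation_invariant_cone_quadratic:
  fixes K :: "'a::euclidean_space set" and B :: "'a \<Rightarrow> 'a"
  assumes "DIM('a) \<ge> 3" "compact K" "convex K" "0 \<in> interior K" "linear B" "bij B"
    and "rotation_invariant K e" "rotation_invariant (B ` K) m" "x0 \<bullet> e \<noteq> 0" "B x0 \<bullet> m = 0"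
  obtains V \<kappa> \<beta> where "\<kappa> > 0"
    "\<And>x. (x \<bullet> e)\<^sup>2 * V \<le> (norm x)\<^sup>2 \<Longrightarrow> x \<in> K \<longleftrightarrow> \<kappa> * ((norm x)\<^sup>2 + \<beta> * (x \<bullet> e)\<^sup>2) \<le> 1"
proof -
  define \<nu> where "\<nu> = adjoint B m"
  have \<nu>: "B x \<bullet> m = x \<bullet> \<nu>" for x by (simp add: \<nu>_def adjoint_works[OF assms(5)])
  have "inj B" using assms(6) by (rule bij_is_inj)
  have "DIM('a) \<ge> 2" using assms(1) by simp
  obtain r where "r > 0" and r: "\<And>z. z \<bullet> m = 0 \<Longrightarrow> z \<in> B ` K \<longleftrightarrow> norm z \<le> r"
    using rotation_invariant_central_section[OF \<open>DIM('a) \<ge> 2\<close> linear_image_convex_body[OF assms(5,6,2-4)]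
        assms(8)] by blast
  have slice: "x \<in> K \<longleftrightarrow> norm (B x) \<le> r" if "x \<bullet> \<nu> = 0" for x
    using r[of "B x"] that \<nu>[of x] \<open>inj B\<close> by (simp add: inj_image_mem_iff)
  have "x0 \<bullet> \<nu> = 0" using assms(10) \<nu> by simp
  obtain V \<kappa> \<beta> where "\<kappa> > 0"
    and cone: "\<And>x. (x \<bullet> e)\<^sup>2 * V \<le> (norm x)\<^sup>2 \<Longrightarrow> x \<in> K \<longleftrightarrow> \<kappa> * ((norm x)\<^sup>2 + \<beta> * (x \<bullet> e)\<^sup>2) \<le> r\<^sup>2"
    by (rule rotation_invariant_section_quadratic[OF assms(1,5) \<open>inj B\<close> assms(7) slice \<open>r > 0\<close>
          \<open>x0 \<bullet> \<nu> = 0\<close> assms(9)])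
      (assumption | rule that; assumption)+
  show ?thesis
  proof (rule that)
    show "\<kappa> / r\<^sup>2 > 0" using \<open>\<kappa> > 0\<close> \<open>r > 0\<close> by simp
    show "x \<in> K \<longleftrightarrow> \<kappa> / r\<^sup>2 * ((norm x)\<^sup>2 + \<beta> * (x \<bullet> e)\<^sup>2) \<le> 1"
      if "(x \<bullet> e)\<^sup>2 * V \<le> (norm x)\<^sup>2" for x
      using cone[OF that] \<open>r > 0\<close> by (simp add: field_simps)
  qed
qed

text \<open>Each hyperplane of revolution meets the other axis obliquely, so both descriptions apply on
  an open cone around a vector orthogonal to both axes.\<close>
lemma rotation_invariant_two_axes_quadratic:
  fixes K :: "'a::euclidean_space set" and B :: "'a \<Rightarrow> 'a"
  assumes "DIM('a) \<ge> 3" "compact K" "convex K" "0 \<in> interior K"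
    and "linear B" "bij B" "e \<noteq> 0" "m \<noteq> 0"
    and "rotation_invariant K e" "rotation_invariant (B ` K) m"
    and "B ` {x. x \<bullet> e = 0} \<noteq> {z. z \<bullet> m = 0}"
  obtains \<kappa>1 \<kappa>2 \<beta>1 \<beta>2 where "\<kappa>1 > 0" "\<kappa>2 > 0"
    "\<And>x. \<kappa>1 * ((norm x)\<^sup>2 + \<beta>1 * (x \<bullet> e)\<^sup>2) = \<kappa>2 * ((norm (B x))\<^sup>2 + \<beta>2 * (B x \<bullet> m)\<^sup>2)"
proof -
  have "inj B" using assms(6) by (rule bij_is_inj)
  have inv_B: "linear (inv B)" "bij (inv B)" "inv B ` B ` K = K" "inv B (B x) = x" for x
    using inj_linear_imp_inv_linear[OF assms(5) \<open>inj B\<close>] bij_imp_bij_inv[OF assms(6)] \<open>inj B\<close>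
    by (simp_all add: image_inv_f_f)
  obtain x1 x2 where x1: "x1 \<bullet> e = 0" "B x1 \<bullet> m \<noteq> 0" and x2: "x2 \<bullet> e \<noteq> 0" "B x2 \<bullet> m = 0"
    using image_hyperplane_neq_witnesses[OF assms(5-8,11)] by blast
  obtain V1 \<kappa>1 \<beta>1 where "\<kappa>1 > 0" and cone1: "\<And>x. (x \<bullet> e)\<^sup>2 * V1 \<le> (norm x)\<^sup>2 \<Longrightarrow>
      x \<in> K \<longleftrightarrow> \<kappa>1 * ((norm x)\<^sup>2 + \<beta>1 * (x \<bullet> e)\<^sup>2) \<le> 1"
    by (rule rotation_invariant_cone_quadratic[OF assms(1-6,9,10) x2])
      (assumption | rule that; assumption)+
  have "rotation_invariant (inv B ` B ` K) e" using assms(9) inv_B(3) by simp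
  moreover have "B x1 \<bullet> m \<noteq> 0" "inv B (B x1) \<bullet> e = 0" using x1 inv_B(4) by simp_all
  ultimately obtain V2 \<kappa>2 \<beta>2 where "\<kappa>2 > 0" and cone2: "\<And>z. (z \<bullet> m)\<^sup>2 * V2 \<le> (norm z)\<^sup>2 \<Longrightarrow>
      z \<in> B ` K \<longleftrightarrow> \<kappa>2 * ((norm z)\<^sup>2 + \<beta>2 * (z \<bullet> m)\<^sup>2) \<le> 1"
    by (rule rotation_invariant_cone_quadratic[OF assms(1) linear_image_convex_body[OF assms(5,6,2-4)]
          inv_B(1,2) assms(10)])
      (assumption | rule that; assumption)+
  obtain w where w: "norm w = 1" "w \<bullet> e = 0" "w \<bullet> adjoint B m = 0"
    using exists_orthogonal_to_two[OF assms(1)] by blast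
  have "w \<noteq> 0" using w(1) by auto
  then have "B w \<noteq> 0" using \<open>inj B\<close> linear_0[OF assms(5)] by (metis injD)
  have "B w \<bullet> m = 0" using w(3) by (simp add: adjoint_works[OF assms(5)])
  have cone2': "x \<in> K \<longleftrightarrow> \<kappa>2 * ((norm (B x))\<^sup>2 + \<beta>2 * (B x \<bullet> m)\<^sup>2) \<le> 1"
    if "(B x \<bullet> m)\<^sup>2 * V2 \<le> (norm (B x))\<^sup>2" for x
    using cone2[OF that] \<open>inj B\<close> by (simp add: inj_image_mem_iff)
  have "\<kappa>1 * ((norm x)\<^sup>2 + \<beta>1 * (x \<bullet> e)\<^sup>2) = \<kappa>2 * ((norm (B x))\<^sup>2 + \<beta>2 * (B x \<bullet> m)\<^sup>2)" for x
    by (rule two_cone_quadratics_coincide[OF compact_imp_bounded[OF assms(2)] assms(5) \<open>w \<noteq> 0\<close>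
        \<open>B w \<noteq> 0\<close> w(2) \<open>B w \<bullet> m = 0\<close> cone1 cone2'])
  then show ?thesis using that \<open>\<kappa>1 > 0\<close> \<open>\<kappa>2 > 0\<close> by blast
qed

section \<open>The common quadratic form is positive definite\<close>

locale revolution_quadratic =
  fixes K :: "'a::euclidean_space set" and B :: "'a \<Rightarrow> 'a" and e m :: 'a
    and \<kappa>1 \<beta>1 \<kappa>2 \<beta>2 :: real
  assumes dim: "DIM('a) \<ge> 3"
    and compact: "compact K" and convex: "convex K" and zero_interior: "0 \<in> interior K"
    and linear_B: "linear B" and bij_B: "bij B" and unit_e: "norm e = 1" and unit_m: "norm m = 1"
    and invariant_e: "rotation_invariant K e" and invariant_m: "rotation_invariant (B ` K) m"
    and hyperplanes_differ: "B ` {x. x \<bullet> e = 0} \<noteq> {z. z \<bullet> m = 0}"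
    and \<kappa>1_pos: "\<kappa>1 > 0" and \<kappa>2_pos: "\<kappa>2 > 0"
    and quadratic_eq:
      "\<And>x. \<kappa>1 * ((norm x)\<^sup>2 + \<beta>1 * (x \<bullet> e)\<^sup>2) = \<kappa>2 * ((norm (B x))\<^sup>2 + \<beta>2 * (B x \<bullet> m)\<^sup>2)"
begin

definition axis2 :: 'a where "axis2 = inv B m"

definition height2 :: "'a \<Rightarrow> real" where "height2 x = B x \<bullet> m"

lemma e_inner_e: "e \<bullet> e = 1" and m_inner_m: "m \<bullet> m = 1"
  using unit_e unit_m by (simp_all add: norm_eq_1)

lemma inj_B: "inj B" using bij_B by (rule bij_is_inj)

lemma linear_inv_B: "linear (inv B)"
  using inj_linear_imp_inv_linear[OF linear_B inj_B] .

lemma B_axis2: "B axis2 = m"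
  using bij_B by (simp add: axis2_def bij_is_surj surj_f_inv_f)

lemma height2_add: "height2 (x + y) = height2 x + height2 y"
  and height2_scale: "height2 (c *\<^sub>R x) = c * height2 x"
  by (simp_all add: height2_def linear_add[OF linear_B] linear_scale[OF linear_B] inner_add_left)

lemma height2_axis2: "height2 axis2 = 1"
  by (simp add: height2_def B_axis2 m_inner_m)

lemma image_height2_zero: "B ` {x. height2 x = 0} = {z. z \<bullet> m = 0}"
proof (intro set_eqI iffI)
  show "z \<in> {z. z \<bullet> m = 0}" if "z \<in> B ` {x. height2 x = 0}" for z
    using that by (auto simp: height2_def)
  show "z \<in> B ` {x. height2 x = 0}" if "z \<in> {z. z \<bullet> m = 0}" for z
    using that bij_B by (intro rev_image_eqI[of "inv B z"]) (simp_all add: height2_def bij_is_surj surj_f_inv_f)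
qed

lemma polar_eq:
  "\<kappa>1 * (x \<bullet> y + \<beta>1 * (x \<bullet> e) * (y \<bullet> e)) = \<kappa>2 * (B x \<bullet> B y + \<beta>2 * height2 x * height2 y)"
proof -
  have "(norm (x + y))\<^sup>2 + \<beta>1 * ((x + y) \<bullet> e)\<^sup>2 = ((norm x)\<^sup>2 + \<beta>1 * (x \<bullet> e)\<^sup>2)
      + ((norm y)\<^sup>2 + \<beta>1 * (y \<bullet> e)\<^sup>2) + 2 * (x \<bullet> y + \<beta>1 * (x \<bullet> e) * (y \<bullet> e))"
    unfolding power2_norm_eq_inner
    by (simp add: inner_add_left inner_add_right inner_commute[of y x] power2_eq_square algebra_simps)
  moreover have "(norm (B (x + y)))\<^sup>2 + \<beta>2 * (B (x + y) \<bullet> m)\<^sup>2 = ((norm (B x))\<^sup>2 + \<beta>2 * (B x \<bullet> m)\<^sup>2)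
      + ((norm (B y))\<^sup>2 + \<beta>2 * (B y \<bullet> m)\<^sup>2) + 2 * (B x \<bullet> B y + \<beta>2 * height2 x * height2 y)"
    unfolding power2_norm_eq_inner linear_add[OF linear_B] height2_def
    by (simp add: inner_add_left inner_add_right inner_commute[of "B y" "B x"] power2_eq_square
        algebra_simps)
  ultimately show ?thesis
    using quadratic_eq[of "x + y"] quadratic_eq[of x] quadratic_eq[of y]
    by (simp add: distrib_left)
qed

lemma axis2_reflection_mem:
  assumes "x \<in> K"
  shows "inv B (axial_reflection m (B x)) \<in> K"
proof -
  have "axial_reflection m (B x) \<in> B ` K"
    using rotation_invariant_axial_reflection[OF invariant_m unit_m] assms by blast
  then show ?thesis using inj_B by (auto simp: inv_f_f)
qed

definition turn :: "'a \<Rightarrow> 'a" where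
  "turn x = axial_reflection e (inv B (axial_reflection m (B x)))"

lemma turn_mem: "x \<in> K \<Longrightarrow> turn x \<in> K"
  unfolding turn_def
  by (intro rotation_invariant_axial_reflection[OF invariant_e unit_e] axis2_reflection_mem)

lemma turn_eq:
  "turn x = x + (4 * (axis2 \<bullet> e) * height2 x - 2 * (x \<bullet> e)) *\<^sub>R e - (2 * height2 x) *\<^sub>R axis2"
proof -
  have "inv B (axial_reflection m (B x)) = (2 * height2 x) *\<^sub>R axis2 - x"
    using inj_B
    by (simp add: axial_reflection_def linear_diff[OF linear_inv_B] linear_scale[OF linear_inv_B]
        axis2_def height2_def inv_f_f)
  then have "turn x = axial_reflection e ((2 * height2 x) *\<^sub>R axis2 - x)"
    by (simp only: turn_def)
  then show ?thesis
    by (simp add: axial_reflection_def inner_diff_left e_inner_e algebra_simps)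
qed

lemma linear_turn: "linear turn"
  by (rule linearI) (simp_all add: turn_eq height2_add height2_scale inner_add_left algebra_simps)

lemma turn_e: "turn e = (4 * (axis2 \<bullet> e) * height2 e - 1) *\<^sub>R e - (2 * height2 e) *\<^sub>R axis2"
  by (simp add: turn_eq e_inner_e algebra_simps scaleR_2)

lemma turn_axis2: "turn axis2 = (2 * (axis2 \<bullet> e)) *\<^sub>R e - axis2"
  by (simp add: turn_eq height2_axis2 algebra_simps scaleR_2)

lemma bounded_K: "bounded K"
  using compact by (rule compact_imp_bounded)

text \<open>For parallel axes \<open>turn\<close> would be a shear along \<open>e\<close>, which the bounded body \<open>K\<close> only survives
  if the two hyperplanes of revolution coincide.\<close>
lemma axis2_not_parallel: "axis2 \<noteq> (axis2 \<bullet> e) *\<^sub>R e"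
proof
  define a where "a = axis2 \<bullet> e"
  assume "axis2 = (axis2 \<bullet> e) *\<^sub>R e"
  then have d: "axis2 = a *\<^sub>R e" by (simp add: a_def)
  have "a * height2 e = 1" using height2_axis2 by (simp add: d height2_scale)
  define f where "f y = 2 * (a * height2 y - y \<bullet> e)" for y
  have "linear f"
    by (rule linearI) (simp_all add: f_def height2_add height2_scale inner_add_left algebra_simps)
  moreover have "f e = 0" using \<open>a * height2 e = 1\<close> by (simp add: f_def e_inner_e)
  moreover have "y + f y *\<^sub>R e \<in> K" if "y \<in> K" for y
  proof -
    have "turn y = y + (4 * a * height2 y - 2 * (y \<bullet> e)) *\<^sub>R e - (2 * height2 y * a) *\<^sub>R e"
      using turn_eq[of y] by (simp add: d e_inner_e)
    also have "\<dots> = y + ((4 * a * height2 y - 2 * (y \<bullet> e)) - 2 * height2 y * a) *\<^sub>R e"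
      by (simp only: scaleR_diff_left add_diff_eq)
    also have "(4 * a * height2 y - 2 * (y \<bullet> e)) - 2 * height2 y * a = f y"
      by (simp add: f_def algebra_simps)
    finally have "turn y = y + f y *\<^sub>R e" .
    then show ?thesis using turn_mem[OF that] by simp
  qed
  moreover have "e \<noteq> 0" using unit_e by auto
  ultimately have "f y = 0" for y
    using bounded_shear_invariant_imp_zero[OF bounded_K zero_interior] by blast
  then have "x \<bullet> e = a * height2 x" for x by (simp add: f_def)
  moreover have "a \<noteq> 0" using \<open>a * height2 e = 1\<close> by auto
  ultimately have "{x. x \<bullet> e = 0} = {x. height2 x = 0}" by auto
  then show False using hyperplanes_differ image_height2_zero by simp
qed

lemma axis2_inner_gt: "(axis2 \<bullet> e)\<^sup>2 < axis2 \<bullet> axis2"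
proof -
  have "(axis2 - (axis2 \<bullet> e) *\<^sub>R e) \<bullet> (axis2 - (axis2 \<bullet> e) *\<^sub>R e) = axis2 \<bullet> axis2 - (axis2 \<bullet> e)\<^sup>2"
    by (simp add: inner_diff_left inner_diff_right e_inner_e inner_commute[of e axis2] power2_eq_square)
  moreover have "axis2 - (axis2 \<bullet> e) *\<^sub>R e \<noteq> 0" using axis2_not_parallel by simp
  ultimately show ?thesis by (metis inner_gt_zero_iff diff_gt_0_iff_gt)
qed

lemma quadratic_eq_axis2:
  "\<kappa>2 * (1 + \<beta>2) = \<kappa>1 * (axis2 \<bullet> axis2 - (axis2 \<bullet> e)\<^sup>2) + \<kappa>1 * (1 + \<beta>1) * (axis2 \<bullet> e)\<^sup>2"
  using quadratic_eq[of axis2] by (simp add: B_axis2 unit_m m_inner_m power2_norm_eq_inner algebra_simps)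

lemma polar_eq_e_axis2: "(axis2 \<bullet> e) * (\<kappa>1 * (1 + \<beta>1)) = height2 e * (\<kappa>2 * (1 + \<beta>2))"
  using polar_eq[of e axis2]
  by (simp add: e_inner_e B_axis2 height2_axis2 inner_commute[of e axis2] algebra_simps)
     (simp add: height2_def)

lemma turn_plane:
  "turn (p *\<^sub>R e + q *\<^sub>R axis2) = ((4 * (axis2 \<bullet> e) * height2 e - 1) * p + 2 * (axis2 \<bullet> e) * q) *\<^sub>R e
    + (- (2 * height2 e * p) - q) *\<^sub>R axis2"
  by (simp add: linear_add[OF linear_turn] linear_scale[OF linear_turn] turn_e turn_axis2 algebra_simps)

text \<open>On the plane spanned by the two axes, \<open>turn\<close> has determinant \<open>1\<close>; this is its
  Cayley-Hamilton identity at \<open>e\<close>.\<close>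
lemma turn_turn_e: "turn (turn e) = (4 * (axis2 \<bullet> e) * height2 e - 2) *\<^sub>R turn e - e"
proof -
  define a b where "a = axis2 \<bullet> e" and "b = height2 e"
  have "turn e = (4 * a * b - 1) *\<^sub>R e + (- (2 * b)) *\<^sub>R axis2" by (simp add: turn_e a_def b_def)
  then have "turn (turn e)
      = ((4 * a * b - 1) * (4 * a * b - 1) + 2 * a * (- (2 * b))) *\<^sub>R e
        + (- (2 * b * (4 * a * b - 1)) - (- (2 * b))) *\<^sub>R axis2"
    by (simp only: turn_plane a_def b_def)
  also have "\<dots> = ((4 * a * b - 2) * (4 * a * b - 1) - 1) *\<^sub>R e + ((4 * a * b - 2) * (- (2 * b))) *\<^sub>R axis2"
    by (simp add: algebra_simps)
  also have "\<dots> = (4 * a * b - 2) *\<^sub>R ((4 * a * b - 1) *\<^sub>R e + (- (2 * b)) *\<^sub>R axis2) - e"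
    unfolding scaleR_add_right scaleR_scaleR by (simp add: scaleR_diff_left)
  also have "\<dots> = (4 * a * b - 2) *\<^sub>R turn e - e"
    by (simp only: \<open>turn e = _\<close>)
  finally show ?thesis by (simp add: a_def b_def)
qed

lemma linear_funpow_turn: "linear (turn ^^ k)"
proof (induction k)
  case (Suc k)
  show ?case unfolding funpow.simps(2) by (rule linear_compose[OF Suc linear_turn])
qed (simp add: linearI)

text \<open>\<open>4 (axis2 \<bullet> e) (height2 e) - 2\<close> is the trace of \<open>turn\<close> on the plane of the axes.\<close>
lemma turn_trace_bound:
  assumes "height2 e \<noteq> 0"
  shows "\<bar>4 * (axis2 \<bullet> e) * height2 e - 2\<bar> < 2"
proof -
  define \<tau> where "\<tau> = 4 * (axis2 \<bullet> e) * height2 e - 2"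
  obtain \<epsilon> where "\<epsilon> > 0" "ball 0 \<epsilon> \<subseteq> K" using zero_interior by (meson mem_interior)
  define t where "t = \<epsilon> / 2"
  have "t > 0" "t *\<^sub>R e \<in> K" using \<open>\<epsilon> > 0\<close> \<open>ball 0 \<epsilon> \<subseteq> K\<close> unit_e by (auto simp: t_def)
  define u where "u k = (turn ^^ k) (t *\<^sub>R e)" for k
  have "u k \<in> K" for k by (induction k) (simp_all add: u_def \<open>t *\<^sub>R e \<in> K\<close> turn_mem)
  then have "bounded (range u)" using bounded_K by (meson bounded_subset image_subsetI)
  moreover have rec: "u (Suc (Suc k)) = \<tau> *\<^sub>R u (Suc k) - u k" for k
  proof -
    have "u (Suc (Suc k)) = (turn ^^ k) (t *\<^sub>R turn (turn e))"
      by (simp add: u_def funpow_Suc_right linear_scale[OF linear_turn] del: funpow.simps)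
    also have "\<dots> = (turn ^^ k) (\<tau> *\<^sub>R (t *\<^sub>R turn e) - t *\<^sub>R e)"
      by (simp add: turn_turn_e \<tau>_def algebra_simps)
    also have "\<dots> = \<tau> *\<^sub>R (turn ^^ k) (t *\<^sub>R turn e) - (turn ^^ k) (t *\<^sub>R e)"
      by (simp only: linear_diff[OF linear_funpow_turn] linear_scale[OF linear_funpow_turn])
    also have "(turn ^^ k) (t *\<^sub>R turn e) = u (Suc k)"
      by (simp add: u_def funpow_Suc_right linear_scale[OF linear_turn] del: funpow.simps)
    finally show ?thesis by (simp add: u_def)
  qed
  moreover have "u 0 \<bullet> (axis2 - (axis2 \<bullet> e) *\<^sub>R e) = 0"
    by (simp add: u_def inner_diff_right e_inner_e inner_commute[of e axis2])
  moreover have "u 1 \<bullet> (axis2 - (axis2 \<bullet> e) *\<^sub>R e) = - 2 * height2 e * (axis2 \<bullet> axis2 - (axis2 \<bullet> e)\<^sup>2) * t"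
    by (simp add: u_def linear_scale[OF linear_turn] turn_e inner_diff_left inner_diff_right
        e_inner_e inner_commute[of e axis2] algebra_simps power2_eq_square)
  moreover have "- 2 * height2 e * (axis2 \<bullet> axis2 - (axis2 \<bullet> e)\<^sup>2) * t \<noteq> 0"
    using assms axis2_inner_gt \<open>t > 0\<close> by simp
  ultimately have "u 1 \<bullet> (axis2 - (axis2 \<bullet> e) *\<^sub>R e) \<noteq> 0" by simp
  then show ?thesis
    using bounded_recurrence_abs_less_2[OF \<open>bounded (range u)\<close> rec \<open>u 0 \<bullet> _ = 0\<close>] by (simp add: \<tau>_def)
qed

lemma one_plus_\<beta>1_pos: "1 + \<beta>1 > 0"
proof -
  define a b where "a = axis2 \<bullet> e" and "b = height2 e"
  define D where "D = axis2 \<bullet> axis2 - a\<^sup>2"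
  define \<mu> \<nu> where "\<mu> = \<kappa>1 * (1 + \<beta>1)" and "\<nu> = \<kappa>2 * (1 + \<beta>2)"
  have "D > 0" using axis2_inner_gt by (simp add: D_def a_def)
  have \<nu>: "\<nu> = \<kappa>1 * D + \<mu> * a\<^sup>2"
    using quadratic_eq_axis2 by (simp add: \<nu>_def \<mu>_def D_def a_def)
  have "a * \<mu> = b * \<nu>" using polar_eq_e_axis2 by (simp add: a_def b_def \<mu>_def \<nu>_def)
  have "\<mu> > 0"
  proof (cases "b = 0")
    case True
    have "B e \<noteq> 0" using unit_e inj_B linear_0[OF linear_B] by (metis injD norm_zero zero_neq_one)
    moreover have "\<mu> = \<kappa>2 * (norm (B e))\<^sup>2"
      using quadratic_eq[of e] True unit_e by (simp add: \<mu>_def b_def height2_def e_inner_e)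
    ultimately show ?thesis using \<kappa>2_pos by simp
  next
    case False
    then have "\<bar>4 * a * b - 2\<bar> < 2" using turn_trace_bound by (simp add: a_def b_def)
    then have pos: "0 < (a * b) * (1 - a * b)" by (simp add: abs_less_iff mult_pos_pos)
    have "\<mu> * ((a * b) * (1 - a * b)) = b * (a * \<mu>) - (a * b)\<^sup>2 * \<mu>"
      by (simp add: algebra_simps power2_eq_square)
    also have "\<dots> = b * (b * \<nu>) - (a * b)\<^sup>2 * \<mu>" using \<open>a * \<mu> = b * \<nu>\<close> by simp
    also have "\<dots> = b\<^sup>2 * \<kappa>1 * D" unfolding \<nu> by (simp add: algebra_simps power2_eq_square)
    finally have "\<mu> * ((a * b) * (1 - a * b)) > 0" using False \<kappa>1_pos \<open>D > 0\<close> by simp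
    then show ?thesis using pos by (simp add: zero_less_mult_iff)
  qed
  then show ?thesis using \<kappa>1_pos by (simp add: \<mu>_def zero_less_mult_iff)
qed

lemma axis2_weight_pos: "\<kappa>2 * (1 + \<beta>2) > 0"
proof -
  have "0 < \<kappa>1 * (axis2 \<bullet> axis2 - (axis2 \<bullet> e)\<^sup>2)" using \<kappa>1_pos axis2_inner_gt by simp
  moreover have "0 \<le> \<kappa>1 * (1 + \<beta>1) * (axis2 \<bullet> e)\<^sup>2" using \<kappa>1_pos one_plus_\<beta>1_pos by simp
  ultimately show ?thesis using quadratic_eq_axis2 by linarith
qed

text \<open>Stretching along \<open>e\<close> turns the first quadratic form into a multiple of the Euclidean
  norm; the polar identity then makes the second axis of revolution an honest one.\<close>
lemma stretched_rotation_invariant_axis2: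
  defines "S \<equiv> stretch (sqrt (1 + \<beta>1)) e"
  shows "rotation_invariant (S ` K) (S axis2)"
  unfolding rotation_invariant_def
proof (intro allI impI)
  define s where "s = sqrt (1 + \<beta>1)"
  have "s\<^sup>2 = 1 + \<beta>1" "s \<noteq> 0" using one_plus_\<beta>1_pos by (simp_all add: s_def)
  then have S_inner: "S x \<bullet> S y = x \<bullet> y + \<beta>1 * (x \<bullet> e) * (y \<bullet> e)" for x y
    by (simp add: S_def s_def[symmetric] inner_stretch[OF unit_e])
  fix x' y'
  assume "x' \<in> S ` K" "y' \<bullet> S axis2 = x' \<bullet> S axis2" "norm y' = norm x'"
  then obtain x where "x \<in> K" "x' = S x" by blast
  define y where "y = stretch (1 / s) e y'"
  have "y' = S y" using \<open>s \<noteq> 0\<close> by (simp add: y_def S_def s_def[symmetric] stretch_stretch[OF unit_e])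
  have polar_axis2: "\<kappa>1 * (S z \<bullet> S axis2) = \<kappa>2 * (1 + \<beta>2) * height2 z" for z
    using polar_eq[of z axis2] by (simp add: S_inner B_axis2 height2_axis2 algebra_simps)
      (simp add: height2_def)
  have "\<kappa>2 * (1 + \<beta>2) * height2 y = \<kappa>1 * (S y \<bullet> S axis2)" by (rule polar_axis2[symmetric])
  also have "\<dots> = \<kappa>1 * (S x \<bullet> S axis2)"
    using \<open>y' \<bullet> S axis2 = x' \<bullet> S axis2\<close> by (simp add: \<open>y' = S y\<close> \<open>x' = S x\<close>)
  also have "\<dots> = \<kappa>2 * (1 + \<beta>2) * height2 x" by (rule polar_axis2)
  finally have "\<kappa>2 * (1 + \<beta>2) * height2 y = \<kappa>2 * (1 + \<beta>2) * height2 x" .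
  then have "height2 y = height2 x" using axis2_weight_pos by (metis less_irrefl mult_left_cancel)
  moreover have "\<kappa>1 * (norm (S z))\<^sup>2 = \<kappa>2 * ((norm (B z))\<^sup>2 + \<beta>2 * (height2 z)\<^sup>2)" for z
  proof -
    have "(norm (S z))\<^sup>2 = (norm z)\<^sup>2 + \<beta>1 * (z \<bullet> e)\<^sup>2"
      using S_inner[of z z] by (simp add: dot_square_norm power2_eq_square)
    then show ?thesis using quadratic_eq[of z] by (simp add: height2_def)
  qed
  then have "\<kappa>2 * ((norm (B y))\<^sup>2 + \<beta>2 * (height2 y)\<^sup>2) = \<kappa>2 * ((norm (B x))\<^sup>2 + \<beta>2 * (height2 x)\<^sup>2)"
    using \<open>norm y' = norm x'\<close> by (metis \<open>y' = S y\<close> \<open>x' = S x\<close>)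
  then have "(norm (B y))\<^sup>2 = (norm (B x))\<^sup>2"
    using \<kappa>2_pos \<open>height2 y = height2 x\<close> by simp
  ultimately have "y \<in> K"
    using rotation_invariant_imageD[OF invariant_m inj_B \<open>x \<in> K\<close>]
    by (simp add: height2_def power2_eq_iff_nonneg)
  then show "y' \<in> S ` K" using \<open>y' = S y\<close> by blast
qed

lemma ellipsoid: "ellipsoid K"
proof -
  define s where "s = sqrt (1 + \<beta>1)"
  define S where "S = stretch s e"
  have "s > 0" using one_plus_\<beta>1_pos by (simp add: s_def)
  have "linear S" "bij S" using \<open>s > 0\<close> unit_e by (simp_all add: S_def linear_stretch bij_stretch)
  note body = linear_image_convex_body[OF \<open>linear S\<close> \<open>bij S\<close> compact convex zero_interior]
  have "rotation_invariant (S ` K) e"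
    using rotation_invariant_stretch[OF unit_e _ invariant_e] \<open>s > 0\<close> by (simp add: S_def)
  moreover define d where "d = inverse (norm (S axis2)) *\<^sub>R S axis2"
  have "S axis2 \<noteq> 0"
  proof
    assume "S axis2 = 0"
    then have "axis2 = 0" using \<open>bij S\<close> linear_0[OF \<open>linear S\<close>] by (metis bij_is_inj injD)
    then show False using axis2_not_parallel by simp
  qed
  then have "rotation_invariant (S ` K) d \<longleftrightarrow> rotation_invariant (S ` K) (S axis2)"
    unfolding d_def by (intro rotation_invariant_scaled_axis) simp
  then have "rotation_invariant (S ` K) d"
    using stretched_rotation_invariant_axis2 by (simp add: S_def s_def)
  moreover have "norm d = 1" using \<open>S axis2 \<noteq> 0\<close> by (simp add: d_def)
  moreover have "\<bar>e \<bullet> d\<bar> < 1"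
  proof -
    have "(S axis2 \<bullet> e)\<^sup>2 = s\<^sup>2 * (axis2 \<bullet> e)\<^sup>2"
      using unit_e by (simp add: S_def stretch_inner_axis power_mult_distrib)
    also have "\<dots> < (norm (S axis2))\<^sup>2"
      unfolding S_def norm_stretch_sq[OF unit_e]
      using axis2_inner_gt by (simp add: power2_norm_eq_inner algebra_simps)
    finally have "\<bar>S axis2 \<bullet> e\<bar> < norm (S axis2)"
      using power2_less_imp_less[of "\<bar>S axis2 \<bullet> e\<bar>" "norm (S axis2)"] by simp
    then show ?thesis
      using \<open>S axis2 \<noteq> 0\<close> by (simp add: d_def inner_commute[of e] field_simps)
  qed
  ultimately obtain R where "R > 0" "S ` K = cball 0 R"
    using rotation_invariant_two_axes_ball[OF dim body unit_e] by blast
  then show ?thesis using ellipsoid_if_linear_image_cball[OF \<open>linear S\<close> \<open>bij S\<close>] by blast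
qed

end

lemma ellipsoid_if_two_revolution_axes:
  fixes K :: "'a::euclidean_space set" and B :: "'a \<Rightarrow> 'a"
  assumes "DIM('a) \<ge> 3" "compact K" "convex K" "0 \<in> interior K"
    and "linear B" "bij B" "norm e = 1" "norm m = 1"
    and "rotation_invariant K e" "rotation_invariant (B ` K) m"
    and "B ` {x. x \<bullet> e = 0} \<noteq> {z. z \<bullet> m = 0}"
  shows "ellipsoid K"
proof -
  have "e \<noteq> 0" "m \<noteq> 0" using assms(7,8) by auto
  then obtain \<kappa>1 \<kappa>2 \<beta>1 \<beta>2 where "\<kappa>1 > 0" "\<kappa>2 > 0"
    and eq: "\<And>x. \<kappa>1 * ((norm x)\<^sup>2 + \<beta>1 * (x \<bullet> e)\<^sup>2) = \<kappa>2 * ((norm (B x))\<^sup>2 + \<beta>2 * (B x \<bullet> m)\<^sup>2)"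
    by (rule rotation_invariant_two_axes_quadratic[OF assms(1-6) _ _ assms(9-11)])
      (assumption | rule that; assumption)+
  interpret revolution_quadratic K B e m \<kappa>1 \<beta>1 \<kappa>2 \<beta>2
    by (rule revolution_quadratic.intro) (fact assms \<open>\<kappa>1 > 0\<close> \<open>\<kappa>2 > 0\<close> eq)+
  show ?thesis by (rule ellipsoid)
qed

theorem mainTheorem9:
  fixes K :: "'a::euclidean_space set"
  assumes "DIM('a) \<ge> 3"
    and "affine_symmetric_body_of_revolution K"
    and "hyperplane_of_revolution K H1"
    and "hyperplane_of_revolution K H2"
    and "H1 \<noteq> H2"
  shows "ellipsoid K"
proof -
  obtain T :: "'a \<Rightarrow> 'a" and K0 e where T: "linear T" "bij T"
    and K0: "compact K0" "convex K0" "0 \<in> interior K0" "norm e = 1" "rotation_invariant K0 e"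
    and "K = T ` K0" "H1 = T ` {x. x \<bullet> e = 0}"
    using hyperplane_of_revolutionE[OF assms(3)] by metis
  obtain S :: "'a \<Rightarrow> 'a" and K1 m where S: "linear S" "bij S"
    and K1: "norm m = 1" "rotation_invariant K1 m" "K = S ` K1" "H2 = S ` {z. z \<bullet> m = 0}"
    using hyperplane_of_revolutionE[OF assms(4)] by metis
  define B where "B = inv S \<circ> T"
  note B = linear_bij_inv_comp[OF S T, folded B_def]
  have "B ` K0 = K1"
    using B(3)[of K0] \<open>K = T ` K0\<close> K1(3) bij_is_inj[OF S(2)] by (metis inj_image_eq_iff)
  moreover have "B ` {x. x \<bullet> e = 0} \<noteq> {z. z \<bullet> m = 0}"
    using B(3)[of "{x. x \<bullet> e = 0}"] \<open>H1 = _\<close> K1(4) assms(5) by metis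
  ultimately have "ellipsoid K0"
    using ellipsoid_if_two_revolution_axes[OF assms(1) K0(1-3) B(1,2) K0(4) K1(1) K0(5)] K1(2) by simp
  then show ?thesis using ellipsoid_linear_image[OF T] \<open>K = T ` K0\<close> by simp
qed

end
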